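(* Let $\phi$ be an algebra automorphism of $\mathrm{DR}(\mathfrak{sl}_2)$ of the form $$h\mapsto f_1(h),\quad t\mapsto t\diamond f_2(h),\quad z_+\mapsto z_-\diamond f_3(h),\quad z_-\mapsto z_+\diamond f_4(h)$$ with $f_1,f_2,f_3,f_4\in\bar U(\mathfrak h)$. Then there exist $\beta\in\{1,-1\}$ and a function $\gamma(h)$ such that $$f_1(h)=-h-2,\quad f_2(h)=\beta\frac{h+2}{h},\quad f_3(h)=\frac{1}{(h-1)\gamma(h)},\quad f_4(h)=(h+3)\gamma(h+2).$$ Conversely, for every $\beta\in\{1,-1\}$ and every invertible element $\gamma(h)$ of $\bar U(\mathfrak h)$, these formulas define an automorphism of $\mathrm{DR}(\mathfrak{sl}_2)$.
   Context: Let $\mathfrak h=\mathbb C h$ and $\bar U(\mathfrak h)$ the localization of $\mathbb C[h]$ at the multiplicative set generated by $h+l$, $l\in\mathbb Z$. The diagonal reduction algebra $\mathrm{DR}(\mathfrak{sl}_2)$ is the associative algebra (with product $\diamond$) containing $\bar U(\mathfrak h)$, generated over it by $z_+,z_-,t$ subject to the weight relations $h\diamond z_\pm=z_\pm\diamond(h\pm2)$, $h\diamond t=t\diamond h$ and the relations $z_+\diamond t=t\diamond z_+\frac{h+4}{h+2}$, $\;z_+\diamond z_-=h-t\diamond t\frac1h+z_-\diamond z_+\frac{h(h+3)}{(h+1)(h+2)}$, $\;t\diamond z_-=z_-\diamond t\frac{h+2}{h}$ (elements of $\bar U(\mathfrak h)$ to the right are multiplied on the right). It is the subalgebra of the diagonal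 reduction algebra of $\mathfrak{gl}_2$ generated by $\bar U(\mathfrak h)$, $z_+=z_{12}$, $z_-=z_{21}$, $t=t_1-t_2$, with $h=h_1-h_2$. *)

theory Defs
  imports "HOL-Algebra.QuotRing" "HOL-Computational_Algebra.Polynomial_Factorial"
    "HOL-Computational_Algebra.Normalized_Fraction" "HOL-Computational_Algebra.Field_as_Ring"
begin

type_synonym rf = "complex poly fract"

definition hvar :: rf where "hvar = Fract [:0, 1:] 1"

definition cst :: "complex \<Rightarrow> rf" where "cst c = Fract [:c:] 1"

definition shift :: "int \<Rightarrow> rf \<Rightarrow> rf" where
  "shift k f = (case quot_of_fract f of (p, q) \<Rightarrow>
      Fract (pcompose p [:of_int k, 1:]) (pcompose q [:of_int k, 1:]))"

definition Ubar :: "rf set" where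
  "Ubar = {Fract p q | p q c ls. c \<noteq> 0 \<and>
             q = smult c (prod_list (map (\<lambda>l. [:of_int l, 1:]) ls))}"

datatype gen = Zp | Zm | T

fun gwt :: "gen \<Rightarrow> int" where
  "gwt Zp = 2" | "gwt Zm = -2" | "gwt T = 0"

definition wt :: "gen list \<Rightarrow> int" where "wt w = sum_list (map gwt w)"

text \<open>Free algebra over Ubar(h) on z_+, z_-, t with the weight relations built in:
  an element is a finitely supported map a from words to Ubar(h), standing for the
  sum of the w \<diamond> a(w) (coefficients on the right); f(h) \<diamond> w = w \<diamond> f(h + wt w).\<close>
definition fmult :: "(gen list \<Rightarrow> rf) \<Rightarrow> (gen list \<Rightarrow> rf) \<Rightarrow> (gen list \<Rightarrow> rf)" where
  "fmult a b = (\<lambda>w. \<Sum>i\<in>{0..length w}.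
      shift (wt (drop i w)) (a (take i w)) * b (drop i w))"

definition FA :: "(gen list \<Rightarrow> rf) ring" where
  "FA = \<lparr>carrier = {a. finite {w. a w \<noteq> 0} \<and> (\<forall>w. a w \<in> Ubar)},
         monoid.mult = fmult,
         monoid.one = (\<lambda>w. if w = [] then 1 else 0),
         ring.zero = (\<lambda>w. 0),
         ring.add = (\<lambda>a b w. a w + b w)\<rparr>"

definition mono :: "gen list \<Rightarrow> rf \<Rightarrow> (gen list \<Rightarrow> rf)" where
  "mono w f = (\<lambda>v. if v = w then f else 0)"

definition rels :: "(gen list \<Rightarrow> rf) set" where
  "rels = {
     (\<lambda>v. mono [Zp, T] 1 v - mono [T, Zp] ((hvar + 4) / (hvar + 2)) v),
     (\<lambda>v. mono [Zp, Zm] 1 v - mono [] hvar v + mono [T, T] (1 / hvar) v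
            - mono [Zm, Zp] (hvar * (hvar + 3) / ((hvar + 1) * (hvar + 2))) v),
     (\<lambda>v. mono [T, Zm] 1 v - mono [Zm, T] ((hvar + 2) / hvar) v)}"

definition DRideal :: "(gen list \<Rightarrow> rf) set" where
  "DRideal = genideal FA rels"

definition DR :: "(gen list \<Rightarrow> rf) set ring" where
  "DR = FA Quot DRideal"

definition cls :: "(gen list \<Rightarrow> rf) \<Rightarrow> (gen list \<Rightarrow> rf) set" where
  "cls x = DRideal +>\<^bsub>FA\<^esub> x"

text \<open>Algebra (i.e. C-linear ring) automorphisms of DR(sl_2).\<close>
definition DR_alg_aut :: "((gen list \<Rightarrow> rf) set \<Rightarrow> (gen list \<Rightarrow> rf) set) \<Rightarrow> bool" where
  "DR_alg_aut \<phi> \<longleftrightarrow> \<phi> \<in> ring_iso DR DR \<and>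
      (\<forall>c. \<phi> (cls (mono [] (cst c))) = cls (mono [] (cst c)))"

end

theory Submission
  imports Defs
begin

text \<open>
  Necessity: applying \<open>\<phi>\<close> to the weight relation \<open>h z\<^sub>+ = z\<^sub>+ (h + 2)\<close> and to the first two defining
  relations (with denominators cleared) gives identities in \<open>DR(sl\<^sub>2)\<close>. They become equations
  between rational functions once \<open>DR(sl\<^sub>2)\<close> is made to act on arrays of rational functions,
  where all defining relations act by zero. These equations force \<open>f\<^sub>1 = -h - 2\<close>,
  \<open>f\<^sub>2\<^sup>2 h\<^sup>2 = f\<^sub>1\<^sup>2\<close> and \<open>f\<^sub>3(h + 2) f\<^sub>4(h) = (h + 3)/(h + 1)\<close>, which is the claimed form.

  Sufficiency: the candidate map lifts to a ring endomorphism of the free ring which sends each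
  defining relation to a \<open>Ubar\<close>-multiple of a defining relation, so it descends to
  \<open>DR(sl\<^sub>2)\<close>; the same construction with \<open>\<gamma>(h)\<close> replaced by \<open>-\<gamma>(-h)\<close> is its inverse.
\<close>

instance fract :: ("{idom,ring_char_0}") ring_char_0
proof
  show "inj (of_nat :: nat \<Rightarrow> 'a fract)"
  proof (rule injI)
    fix m n :: nat assume "(of_nat m :: 'a fract) = of_nat n"
    hence "Fract (of_nat m :: 'a) 1 = Fract (of_nat n) 1" by (simp add: of_nat_fract)
    thus "m = n" by (simp add: eq_fract)
  qed
qed

instance fract :: ("{idom,ring_char_0}") field_char_0 ..

lemma sum_triangle_swap:
  "(\<Sum>i\<in>{0..n::nat}. \<Sum>j\<in>{0..i}. F j i) = (\<Sum>j\<in>{0..n}. \<Sum>i\<in>{j..n}. F j i)"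
proof (induct n)
  case 0 thus ?case by simp
next
  case (Suc n)
  have "(\<Sum>j\<in>{0..Suc n}. \<Sum>i\<in>{j..Suc n}. F j i)
      = (\<Sum>j\<in>{0..n}. \<Sum>i\<in>{j..Suc n}. F j i) + F (Suc n) (Suc n)" by simp
  also have "(\<Sum>j\<in>{0..n}. \<Sum>i\<in>{j..Suc n}. F j i) = (\<Sum>j\<in>{0..n}. (\<Sum>i\<in>{j..n}. F j i) + F j (Suc n))"
    by (rule sum.cong) auto
  finally show ?case using Suc by (simp add: sum.distrib)
qed

lemma sum_reindex_from: "(\<Sum>k\<in>{0..n - j}. G (j + k)) = (\<Sum>i\<in>{j..n::nat}. G i)" if "j \<le> n"
proof -
  have "(\<Sum>i\<in>{j..n}. G i) = (\<Sum>i\<in>{0 + j..(n - j) + j}. G i)" using that by simp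
  also have "\<dots> = (\<Sum>k\<in>{0..n - j}. G (k + j))" by (rule sum.shift_bounds_cl_nat_ivl)
  finally show ?thesis by (simp add: add.commute)
qed

lemma drop_split: "j \<le> i \<Longrightarrow> i \<le> length w \<Longrightarrow> drop j w = drop j (take i w) @ drop i w"
proof -
  assume a: "j \<le> i" "i \<le> length w"
  have "drop j w = drop j (take i w @ drop i w)" by (simp only: append_take_drop_id)
  also have "\<dots> = drop j (take i w) @ drop (j - length (take i w)) (drop i w)" by (rule drop_append)
  also have "\<dots> = drop j (take i w) @ drop i w" using a by simp
  finally show ?thesis .
qed

lemma inj_on_take_drop: "inj_on (\<lambda>(w, i). (take i w, drop i w)) (Sigma W (\<lambda>w. {0..length w}))"
proof (rule inj_onI, clarsimp)
  fix w1 w2 :: "'a list" and i1 i2 :: nat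
  assume "take i1 w1 = take i2 w2" "drop i1 w1 = drop i2 w2" "i1 \<le> length w1" "i2 \<le> length w2"
  then show "w1 = w2 \<and> i1 = i2"
    by (metis append_take_drop_id length_take min.absorb2)
qed

lemma sum_append_splits:
  fixes T :: "'a list \<Rightarrow> 'a list \<Rightarrow> 'b::comm_monoid_add"
  assumes A: "finite A" and B: "finite B" and T: "\<And>u v. T u v \<noteq> 0 \<Longrightarrow> u \<in> A \<and> v \<in> B"
  shows "(\<Sum>w\<in>(\<lambda>(u,v). u @ v) ` (A \<times> B). \<Sum>i\<in>{0..length w}. T (take i w) (drop i w))
       = (\<Sum>u\<in>A. \<Sum>v\<in>B. T u v)"
proof -
  let ?W = "(\<lambda>(u,v). u @ v) ` (A \<times> B)"
  let ?S = "Sigma ?W (\<lambda>w. {0..length w})"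
  let ?g = "\<lambda>(w, i). (take i w, drop i w)"
  have fS: "finite ?S" using A B by (intro finite_SigmaI) simp_all
  have "(\<Sum>w\<in>?W. \<Sum>i\<in>{0..length w}. T (take i w) (drop i w)) = (\<Sum>(w,i)\<in>?S. T (take i w) (drop i w))"
    using A B by (intro sum.Sigma) simp_all
  also have "\<dots> = (\<Sum>p\<in>?g ` ?S. T (fst p) (snd p))"
    unfolding sum.reindex[OF inj_on_take_drop] by (rule sum.cong) auto
  also have "\<dots> = (\<Sum>p\<in>A \<times> B. T (fst p) (snd p))"
  proof (rule sum.mono_neutral_right)
    show "A \<times> B \<subseteq> ?g ` ?S"
    proof
      fix p assume p: "p \<in> A \<times> B"
      then obtain u v where uv: "p = (u, v)" "u \<in> A" "v \<in> B" by blast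
      then have "(u @ v, length u) \<in> ?S" by auto
      moreover have "p = ?g (u @ v, length u)" using uv by simp
      ultimately show "p \<in> ?g ` ?S" by (rule rev_image_eqI)
    qed
    show "\<forall>p\<in>?g ` ?S - A \<times> B. T (fst p) (snd p) = 0"
      using T by (auto simp: mem_Times_iff)
  qed (use fS in simp)
  also have "\<dots> = (\<Sum>u\<in>A. \<Sum>v\<in>B. T u v)"
    by (simp add: sum.cartesian_product case_prod_beta)
  finally show ?thesis .
qed

section \<open>Substitutions in rational functions\<close>

definition fract_compose :: "complex poly \<Rightarrow> rf \<Rightarrow> rf" where
  "fract_compose r f = (case quot_of_fract f of (p, q) \<Rightarrow> Fract (pcompose p r) (pcompose q r))"

lemma shift_eq_fract_compose: "shift k f = fract_compose [:of_int k, 1:] f"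
  by (simp add: shift_def fract_compose_def)

lemma fract_compose_Fract:
  assumes r: "degree r > 0" and q: "q \<noteq> 0"
  shows "fract_compose r (Fract p q) = Fract (pcompose p r) (pcompose q r)"
proof -
  obtain p' q' where pq: "quot_of_fract (Fract p q) = (p', q')" by (cases "quot_of_fract (Fract p q)")
  have q': "q' \<noteq> 0" using snd_quot_of_fract_nonzero[of "Fract p q"] pq by simp
  have "Fract p' q' = Fract p q" using Fract_quot_of_fract[of "Fract p q"] pq by simp
  hence e: "p' * q = p * q'" using q q' by (simp add: eq_fract)
  have nz1: "pcompose q' r \<noteq> 0" "pcompose q r \<noteq> 0" using q q' pcompose_eq_0[OF _ r] by auto
  have "pcompose p' r * pcompose q r = pcompose p r * pcompose q' r"
    using e by (metis pcompose_mult)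
  thus ?thesis using nz1 by (simp add: fract_compose_def pq eq_fract)
qed

lemma fract_compose_add: "degree r > 0 \<Longrightarrow> fract_compose r (f + g) = fract_compose r f + fract_compose r g"
proof (induct f, induct g)
  fix a b c d :: "complex poly" assume "degree r > 0" "b \<noteq> 0" "d \<noteq> 0"
  thus "fract_compose r (Fract c d + Fract a b) = fract_compose r (Fract c d) + fract_compose r (Fract a b)"
    by (simp add: fract_compose_Fract pcompose_add pcompose_mult pcompose_eq_0_iff)
qed

lemma fract_compose_mult: "degree r > 0 \<Longrightarrow> fract_compose r (f * g) = fract_compose r f * fract_compose r g"
proof (induct f, induct g)
  fix a b c d :: "complex poly" assume "degree r > 0" "b \<noteq> 0" "d \<noteq> 0"
  thus "fract_compose r (Fract c d * Fract a b) = fract_compose r (Fract c d) * fract_compose r (Fract a b)"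
    by (simp add: fract_compose_Fract pcompose_add pcompose_mult pcompose_eq_0_iff)
qed

lemma fract_compose_uminus: "degree r > 0 \<Longrightarrow> fract_compose r (- f) = - fract_compose r f"
proof (induct f)
  fix a b :: "complex poly" assume "degree r > 0" "b \<noteq> 0"
  thus "fract_compose r (- Fract a b) = - fract_compose r (Fract a b)"
    by (simp add: fract_compose_Fract pcompose_uminus pcompose_eq_0_iff)
qed

lemma fract_compose_diff: "degree r > 0 \<Longrightarrow> fract_compose r (f - g) = fract_compose r f - fract_compose r g"
  using fract_compose_add[of r f "-g"] fract_compose_uminus[of r g] by simp

lemma fract_compose_inverse: "degree r > 0 \<Longrightarrow> fract_compose r (inverse f) = inverse (fract_compose r f)"
proof (induct f)
  fix a b :: "complex poly" assume r: "degree r > 0" and b: "b \<noteq> 0"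
  show "fract_compose r (inverse (Fract a b)) = inverse (fract_compose r (Fract a b))"
  proof (cases "a = 0")
    case True thus ?thesis using r b by (simp add: fract_compose_Fract eq_fract(2) pcompose_1)
  next
    case False thus ?thesis using r b by (simp add: fract_compose_Fract pcompose_eq_0_iff)
  qed
qed

lemma fract_compose_divide: "degree r > 0 \<Longrightarrow> fract_compose r (f / g) = fract_compose r f / fract_compose r g"
  by (simp add: divide_inverse fract_compose_mult fract_compose_inverse)

lemma fract_compose_poly: "degree r > 0 \<Longrightarrow> fract_compose r (Fract p 1) = Fract (pcompose p r) 1"
  by (simp add: fract_compose_Fract pcompose_1)

lemma fract_compose_0: "degree r > 0 \<Longrightarrow> fract_compose r 0 = 0"
  using fract_compose_poly[of r 0] by (simp add: Zero_fract_def)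

lemma fract_compose_1: "degree r > 0 \<Longrightarrow> fract_compose r 1 = 1"
  using fract_compose_poly[of r 1] by (simp add: One_fract_def pcompose_1)

lemma fract_compose_comp: "degree r > 0 \<Longrightarrow> degree s > 0 \<Longrightarrow> fract_compose s (fract_compose r f) = fract_compose (pcompose r s) f"
proof (induct f)
  fix a b :: "complex poly" assume r: "degree r > 0" and s: "degree s > 0" and b: "b \<noteq> 0"
  have "degree (pcompose r s) > 0" using r s by (simp add: degree_pcompose)
  thus "fract_compose s (fract_compose r (Fract a b)) = fract_compose (pcompose r s) (Fract a b)"
    using r s b by (simp add: fract_compose_Fract pcompose_eq_0_iff pcompose_assoc)
qed

lemma fract_compose_id: "fract_compose [:0,1:] f = f"
  by (induct f) (simp add: fract_compose_Fract)

abbreviation rf_of_poly :: "complex poly \<Rightarrow> rf" where "rf_of_poly p \<equiv> Fract p 1"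

lemma rf_of_poly_uminus: "- rf_of_poly p = rf_of_poly (- p)" by simp
lemma rf_of_poly_diff: "rf_of_poly p - rf_of_poly q = rf_of_poly (p - q)" by simp
lemma rf_of_poly_0: "rf_of_poly 0 = 0" by (simp add: Zero_fract_def)
lemma rf_of_poly_1: "rf_of_poly 1 = 1" by (simp add: One_fract_def)
lemma rf_of_poly_of_nat: "rf_of_poly (of_nat n) = of_nat n" by (simp add: Fract_of_nat_eq)
lemma rf_of_poly_numeral: "rf_of_poly (numeral n) = numeral n" using rf_of_poly_of_nat[of "numeral n"] by simp
lemma rf_of_poly_of_int: "rf_of_poly (of_int k) = of_int k"
proof (cases "k \<ge> 0")
  case True then obtain n where "k = int n" by (metis nonneg_int_cases)
  thus ?thesis by (simp add: rf_of_poly_of_nat)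
next
  case False then obtain n where "k = - int n" by (metis neg_int_cases less_le not_le)
  thus ?thesis by (simp add: rf_of_poly_of_nat rf_of_poly_uminus[symmetric])
qed

lemma hvar_plus_int: "hvar + of_int k = rf_of_poly [:of_int k, 1:]"
proof -
  have "[:of_int k, 1:] = [:0,1:] + (of_int k :: complex poly)" by (simp add: of_int_poly)
  thus ?thesis by (simp add: hvar_def rf_of_poly_of_int[symmetric])
qed

lemma hvar_plus_int_nz: "hvar + of_int k \<noteq> 0"
  by (simp add: hvar_plus_int eq_fract(1)[of 1 1, where c=0, simplified] flip: rf_of_poly_0)

lemma hvar_nz: "hvar \<noteq> 0" using hvar_plus_int_nz[of 0] by simp

lemma fract_compose_of_int: "degree r > 0 \<Longrightarrow> fract_compose r (of_int k) = of_int k"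
  by (metis rf_of_poly_of_int fract_compose_poly pcompose_const of_int_poly)
lemma fract_compose_numeral: "degree r > 0 \<Longrightarrow> fract_compose r (numeral n) = numeral n"
  using fract_compose_of_int[of r "numeral n"] by simp
lemma fract_compose_hvar: "degree r > 0 \<Longrightarrow> fract_compose r hvar = rf_of_poly r"
  by (simp add: hvar_def fract_compose_poly pcompose_pCons)
lemma fract_compose_cst: "degree r > 0 \<Longrightarrow> fract_compose r (cst c) = cst c"
  by (simp add: cst_def fract_compose_poly)

lemma shift_add: "shift k (f + g) = shift k f + shift k g" by (simp add: shift_eq_fract_compose fract_compose_add)
lemma shift_mult: "shift k (f * g) = shift k f * shift k g" by (simp add: shift_eq_fract_compose fract_compose_mult)
lemma shift_uminus: "shift k (- f) = - shift k f" by (simp add: shift_eq_fract_compose fract_compose_uminus)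
lemma shift_diff: "shift k (f - g) = shift k f - shift k g" by (simp add: shift_eq_fract_compose fract_compose_diff)
lemma shift_inverse: "shift k (inverse f) = inverse (shift k f)" by (simp add: shift_eq_fract_compose fract_compose_inverse)
lemma shift_divide: "shift k (f / g) = shift k f / shift k g" by (simp add: shift_eq_fract_compose fract_compose_divide)
lemma shift_0: "shift k 0 = 0" by (simp add: shift_eq_fract_compose fract_compose_0)
lemma shift_1: "shift k 1 = 1" by (simp add: shift_eq_fract_compose fract_compose_1)
lemma shift_numeral: "shift k (numeral n) = numeral n" by (simp add: shift_eq_fract_compose fract_compose_numeral)
lemma shift_of_int: "shift k (of_int n) = of_int n" by (simp add: shift_eq_fract_compose fract_compose_of_int)
lemma shift_cst: "shift k (cst c) = cst c" by (simp add: shift_eq_fract_compose fract_compose_cst)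
lemma shift_hvar: "shift k hvar = hvar + of_int k"
  by (simp add: shift_eq_fract_compose fract_compose_hvar hvar_plus_int)
lemma shift_shift: "shift j (shift k f) = shift (j + k) f"
  by (simp add: shift_eq_fract_compose fract_compose_comp pcompose_pCons algebra_simps)
lemma shift_zero[simp]: "shift 0 f = f" by (simp add: shift_eq_fract_compose fract_compose_id)
lemma shift_inj: "shift k f = shift k g \<longleftrightarrow> f = g"
  by (metis shift_shift shift_zero add.commute add.right_inverse)
lemma shift_eq_0: "shift k f = 0 \<longleftrightarrow> f = 0" using shift_inj[of k f 0] by (simp add: shift_0)

lemmas shift_simps = shift_add shift_mult shift_uminus shift_diff shift_inverse shift_divide
  shift_0 shift_1 shift_numeral shift_of_int shift_cst shift_hvar shift_shift

definition reflect :: "rf \<Rightarrow> rf" where "reflect f = fract_compose [:-2, -1:] f"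

lemma reflect_add: "reflect (f + g) = reflect f + reflect g" by (simp add: reflect_def fract_compose_add)
lemma reflect_mult: "reflect (f * g) = reflect f * reflect g" by (simp add: reflect_def fract_compose_mult)
lemma reflect_uminus: "reflect (- f) = - reflect f" by (simp add: reflect_def fract_compose_uminus)
lemma reflect_diff: "reflect (f - g) = reflect f - reflect g" by (simp add: reflect_def fract_compose_diff)
lemma reflect_inverse: "reflect (inverse f) = inverse (reflect f)" by (simp add: reflect_def fract_compose_inverse)
lemma reflect_divide: "reflect (f / g) = reflect f / reflect g" by (simp add: reflect_def fract_compose_divide)
lemma reflect_0: "reflect 0 = 0" by (simp add: reflect_def fract_compose_0)
lemma reflect_1: "reflect 1 = 1" by (simp add: reflect_def fract_compose_1)
lemma reflect_numeral: "reflect (numeral n) = numeral n" by (simp add: reflect_def fract_compose_numeral)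
lemma reflect_of_int: "reflect (of_int n) = of_int n" by (simp add: reflect_def fract_compose_of_int)
lemma reflect_cst: "reflect (cst c) = cst c" by (simp add: reflect_def fract_compose_cst)
lemma reflect_hvar: "reflect hvar = - hvar - 2"
proof -
  have "rf_of_poly [:-2,-1:] = rf_of_poly (- [:0,1:] - 2)" by (simp add: numeral_poly)
  moreover have "reflect hvar = rf_of_poly [:-2,-1:]" by (simp add: reflect_def fract_compose_hvar)
  ultimately show ?thesis by (simp add: hvar_def rf_of_poly_diff[symmetric] rf_of_poly_uminus[symmetric] rf_of_poly_numeral)
qed
lemma reflect_reflect: "reflect (reflect f) = f"
  by (simp add: reflect_def fract_compose_comp pcompose_pCons fract_compose_id)
lemma reflect_shift: "reflect (shift k f) = shift (- k) (reflect f)"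
  by (simp add: reflect_def shift_eq_fract_compose fract_compose_comp pcompose_pCons algebra_simps)
lemma reflect_eq_0: "reflect f = 0 \<longleftrightarrow> f = 0" by (metis reflect_reflect reflect_0)

lemmas reflect_simps = reflect_add reflect_mult reflect_uminus reflect_diff reflect_inverse reflect_divide
  reflect_0 reflect_1 reflect_numeral reflect_of_int reflect_cst reflect_hvar

section \<open>Closure properties of \<open>Ubar\<close>\<close>

definition lin_factor :: "int \<Rightarrow> complex poly" where "lin_factor l = [:of_int l, 1:]"
definition lin_prod :: "int list \<Rightarrow> complex poly" where "lin_prod ls = prod_list (map lin_factor ls)"

lemma lin_prod_nz: "lin_prod ls \<noteq> 0"
  by (auto simp: lin_prod_def lin_factor_def prod_list_zero_iff)

lemma lin_prod_append: "lin_prod (xs @ ys) = lin_prod xs * lin_prod ys" by (simp add: lin_prod_def)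

lemma Ubar_iff: "x \<in> Ubar \<longleftrightarrow> (\<exists>p c ls. c \<noteq> 0 \<and> x = Fract p (smult c (lin_prod ls)))"
proof -
  have l: "lin_factor = (\<lambda>l. [:of_int l, 1:])" by (rule ext) (simp add: lin_factor_def)
  show ?thesis unfolding Ubar_def lin_prod_def l by blast
qed

lemma UbarI: "c \<noteq> 0 \<Longrightarrow> Fract p (smult c (lin_prod ls)) \<in> Ubar"
  by (auto simp: Ubar_iff)

lemma Ubar_add: assumes "x \<in> Ubar" "y \<in> Ubar" shows "x + y \<in> Ubar"
proof -
  obtain p1 c1 l1 p2 c2 l2 where a: "c1 \<noteq> 0" "x = Fract p1 (smult c1 (lin_prod l1))"
    "c2 \<noteq> 0" "y = Fract p2 (smult c2 (lin_prod l2))" using assms by (auto simp: Ubar_iff)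
  have "x + y = Fract (p1 * smult c2 (lin_prod l2) + p2 * smult c1 (lin_prod l1)) (smult (c1 * c2) (lin_prod (l1 @ l2)))"
    using a lin_prod_nz by (simp add: lin_prod_append mult_ac)
  thus ?thesis using a by (simp add: UbarI)
qed

lemma Ubar_mult: assumes "x \<in> Ubar" "y \<in> Ubar" shows "x * y \<in> Ubar"
proof -
  obtain p1 c1 l1 p2 c2 l2 where a: "c1 \<noteq> 0" "x = Fract p1 (smult c1 (lin_prod l1))"
    "c2 \<noteq> 0" "y = Fract p2 (smult c2 (lin_prod l2))" using assms by (auto simp: Ubar_iff)
  have "x * y = Fract (p1 * p2) (smult (c1 * c2) (lin_prod (l1 @ l2)))"
    using a lin_prod_nz by (simp add: lin_prod_append mult_ac)
  thus ?thesis using a by (simp add: UbarI)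
qed

lemma Ubar_uminus: assumes "x \<in> Ubar" shows "- x \<in> Ubar"
  using assms by (auto simp: Ubar_iff) (metis minus_fract)

lemma Ubar_diff: "x \<in> Ubar \<Longrightarrow> y \<in> Ubar \<Longrightarrow> x - y \<in> Ubar"
  using Ubar_add[of x "-y"] Ubar_uminus[of y] by simp

lemma Ubar_rf_of_poly: "rf_of_poly p \<in> Ubar"
  using UbarI[of 1 p "[]"] by (simp add: lin_prod_def one_pCons)

lemma Ubar_inv_lin: "inverse (hvar + of_int l) \<in> Ubar"
  using UbarI[of 1 1 "[l]"] by (simp add: lin_prod_def lin_factor_def hvar_plus_int)

lemma Ubar_0: "0 \<in> Ubar" using Ubar_rf_of_poly[of 0] by (simp add: rf_of_poly_0)
lemma Ubar_1: "1 \<in> Ubar" using Ubar_rf_of_poly[of 1] by (simp add: rf_of_poly_1)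
lemma Ubar_numeral: "numeral n \<in> Ubar" using Ubar_rf_of_poly[of "numeral n"] by (simp add: rf_of_poly_numeral)
lemma Ubar_hvar: "hvar \<in> Ubar" by (simp add: hvar_def Ubar_rf_of_poly)
lemma Ubar_cst: "cst c \<in> Ubar" by (simp add: cst_def Ubar_rf_of_poly)
lemma Ubar_inv_hvar: "inverse hvar \<in> Ubar" using Ubar_inv_lin[of 0] by simp
lemma Ubar_inv_plus: "inverse (hvar + numeral n) \<in> Ubar" using Ubar_inv_lin[of "numeral n"] by simp

lemma lin_prod_shift: "pcompose (lin_prod ls) [:of_int k, 1:] = lin_prod (map (\<lambda>l. l + k) ls)"
proof (induct ls)
  case Nil thus ?case by (simp add: lin_prod_def pcompose_1)
next
  case (Cons a ls)
  have "pcompose (lin_factor a) [:of_int k, 1:] = lin_factor (a + k)"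
    by (simp add: lin_factor_def pcompose_pCons)
  thus ?case using Cons by (simp add: lin_prod_def pcompose_mult)
qed

lemma lin_prod_reflect: "pcompose (lin_prod ls) [:-2, -1:] = smult ((-1) ^ length ls) (lin_prod (map (\<lambda>l. 2 - l) ls))"
proof (induct ls)
  case Nil thus ?case by (simp add: lin_prod_def pcompose_1)
next
  case (Cons a ls)
  have "pcompose (lin_factor a) [:-2,-1:] = smult (-1) (lin_factor (2 - a))"
    by (simp add: lin_factor_def pcompose_pCons)
  thus ?case using Cons by (simp add: lin_prod_def pcompose_mult mult_ac)
qed

lemma Ubar_shift: assumes "x \<in> Ubar" shows "shift k x \<in> Ubar"
proof -
  obtain p c l where a: "c \<noteq> 0" "x = Fract p (smult c (lin_prod l))" using assms by (auto simp: Ubar_iff)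
  have "shift k x = Fract (pcompose p [:of_int k, 1:]) (smult c (lin_prod (map (\<lambda>l. l + k) l)))"
    using a lin_prod_nz by (simp add: shift_eq_fract_compose fract_compose_Fract pcompose_smult lin_prod_shift)
  thus ?thesis using a by (simp add: UbarI)
qed

lemma Ubar_reflect: assumes "x \<in> Ubar" shows "reflect x \<in> Ubar"
proof -
  obtain p c l where a: "c \<noteq> 0" "x = Fract p (smult c (lin_prod l))" using assms by (auto simp: Ubar_iff)
  have "reflect x = Fract (pcompose p [:-2, -1:]) (smult (c * (-1) ^ length l) (lin_prod (map (\<lambda>l. 2 - l) l)))"
    using a lin_prod_nz by (simp add: reflect_def fract_compose_Fract pcompose_smult lin_prod_reflect)
  thus ?thesis using a by (simp add: UbarI)
qed

section \<open>The free ring\<close>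

lemma wt_Nil[simp]: "wt [] = 0" by (simp add: wt_def)
lemma wt_Cons[simp]: "wt (g # w) = gwt g + wt w" by (simp add: wt_def)
lemma wt_append[simp]: "wt (u @ v) = wt u + wt v" by (simp add: wt_def)

lemma sum_Ubar: "finite A \<Longrightarrow> (\<And>x. x \<in> A \<Longrightarrow> f x \<in> Ubar) \<Longrightarrow> sum f A \<in> Ubar"
  by (induct A rule: finite_induct) (auto simp: Ubar_0 Ubar_add)

lemma carrier_FA: "a \<in> carrier FA \<longleftrightarrow> finite {w. a w \<noteq> 0} \<and> (\<forall>w. a w \<in> Ubar)"
  by (simp add: FA_def)
lemma mult_FA: "a \<otimes>\<^bsub>FA\<^esub> b = fmult a b" by (simp add: FA_def)
lemma one_FA: "\<one>\<^bsub>FA\<^esub> = (\<lambda>w. if w = [] then 1 else 0)" by (simp add: FA_def)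
lemma zero_FA: "\<zero>\<^bsub>FA\<^esub> = (\<lambda>w. 0)" by (simp add: FA_def)
lemma add_FA: "a \<oplus>\<^bsub>FA\<^esub> b = (\<lambda>w. a w + b w)" by (simp add: FA_def)

lemma shift_sum: "shift k (sum f A) = (\<Sum>x\<in>A. shift k (f x))"
  by (induct A rule: infinite_finite_induct) (simp_all add: shift_0 shift_add)

lemma fmult_fmult_left:
  "fmult (fmult a b) c w = (\<Sum>i\<in>{0..length w}. \<Sum>j\<in>{0..i}.
     shift (wt (drop j w)) (a (take j w)) * (shift (wt (drop i w)) (b (drop j (take i w))) * c (drop i w)))"
  unfolding fmult_def[of "fmult a b"]
proof (rule sum.cong[OF refl])
  fix i assume i: "i \<in> {0..length w}"
  have "fmult a b (take i w) = (\<Sum>j\<in>{0..i}. shift (wt (drop j (take i w))) (a (take j w)) * b (drop j (take i w)))"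
    using i by (simp add: fmult_def min_def)
  moreover have "wt (drop i w) + wt (drop j (take i w)) = wt (drop j w)" if "j \<le> i" for j
    using drop_split[OF that, of w] i by simp
  ultimately show "shift (wt (drop i w)) (fmult a b (take i w)) * c (drop i w) = (\<Sum>j\<in>{0..i}.
     shift (wt (drop j w)) (a (take j w)) * (shift (wt (drop i w)) (b (drop j (take i w))) * c (drop i w)))"
    by (simp add: shift_sum shift_mult shift_shift sum_distrib_right mult.assoc)
qed

lemma fmult_fmult_right:
  "fmult a (fmult b c) w = (\<Sum>j\<in>{0..length w}. \<Sum>i\<in>{j..length w}.
     shift (wt (drop j w)) (a (take j w)) * (shift (wt (drop i w)) (b (drop j (take i w))) * c (drop i w)))"
  unfolding fmult_def[of a]
proof (rule sum.cong[OF refl])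
  fix j assume j: "j \<in> {0..length w}"
  have "fmult b c (drop j w) = (\<Sum>k\<in>{0..length w - j}.
      shift (wt (drop (j + k) w)) (b (drop j (take (j + k) w))) * c (drop (j + k) w))"
    by (simp add: fmult_def drop_take add.commute)
  also have "\<dots> = (\<Sum>i\<in>{j..length w}. shift (wt (drop i w)) (b (drop j (take i w))) * c (drop i w))"
    using j by (intro sum_reindex_from) simp
  finally show "shift (wt (drop j w)) (a (take j w)) * fmult b c (drop j w) = (\<Sum>i\<in>{j..length w}.
      shift (wt (drop j w)) (a (take j w)) * (shift (wt (drop i w)) (b (drop j (take i w))) * c (drop i w)))"
    by (simp add: sum_distrib_left)
qed

lemma fmult_assoc: "fmult (fmult a b) c = fmult a (fmult b c)"
  by (rule ext) (simp only: fmult_fmult_left fmult_fmult_right sum_triangle_swap)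

lemma fmult_supp: "{w. fmult a b w \<noteq> 0} \<subseteq> (\<lambda>(u,v). u @ v) ` ({u. a u \<noteq> 0} \<times> {v. b v \<noteq> 0})"
proof
  fix w assume "w \<in> {w. fmult a b w \<noteq> 0}"
  hence "(\<Sum>i\<in>{0..length w}. shift (wt (drop i w)) (a (take i w)) * b (drop i w)) \<noteq> 0"
    by (simp add: fmult_def)
  then obtain i where i: "shift (wt (drop i w)) (a (take i w)) * b (drop i w) \<noteq> 0"
    using sum.not_neutral_contains_not_neutral by blast
  hence "a (take i w) \<noteq> 0" "b (drop i w) \<noteq> 0" by (auto simp: shift_0)
  hence "(take i w, drop i w) \<in> {u. a u \<noteq> 0} \<times> {v. b v \<noteq> 0}" by simp
  moreover have "w = (\<lambda>(u,v). u @ v) (take i w, drop i w)" by simp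
  ultimately show "w \<in> (\<lambda>(u,v). u @ v) ` ({u. a u \<noteq> 0} \<times> {v. b v \<noteq> 0})" by blast
qed
lemma fmult_carrier: assumes "a \<in> carrier FA" "b \<in> carrier FA" shows "fmult a b \<in> carrier FA"
proof -
  have "finite {w. fmult a b w \<noteq> 0}"
    using assms by (intro finite_subset[OF fmult_supp]) (auto simp: carrier_FA)
  moreover have "fmult a b w \<in> Ubar" for w
    using assms unfolding fmult_def carrier_FA
    by (intro sum_Ubar) (auto intro!: Ubar_mult Ubar_shift)
  ultimately show ?thesis by (simp add: carrier_FA)
qed

lemma fmult_one_left: "fmult (\<lambda>w. if w = [] then 1 else 0) b = b"
proof
  fix w
  have "fmult (\<lambda>w. if w = [] then 1 else 0) b w = (\<Sum>i\<in>{0..length w}. if i = 0 then b w else 0)"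
    unfolding fmult_def
  proof (rule sum.cong[OF refl])
    fix i assume i: "i \<in> {0..length w}"
    show "shift (wt (drop i w)) (if take i w = [] then 1 else 0) * b (drop i w) = (if i = 0 then b w else 0)"
    proof (cases "i = 0")
      case False
      hence "take i w \<noteq> []" using i by auto
      thus ?thesis using False by (simp add: shift_0)
    qed (simp add: shift_1)
  qed
  thus "fmult (\<lambda>w. if w = [] then 1 else 0) b w = b w" by simp
qed

lemma fmult_one_right: "fmult a (\<lambda>w. if w = [] then 1 else 0) = a"
proof
  fix w
  have "fmult a (\<lambda>w. if w = [] then 1 else 0) w = (\<Sum>i\<in>{0..length w}. if i = length w then a w else 0)"
    unfolding fmult_def
  proof (rule sum.cong[OF refl])
    fix i assume i: "i \<in> {0..length w}"
    show "shift (wt (drop i w)) (a (take i w)) * (if drop i w = [] then 1 else 0) = (if i = length w then a w else 0)"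
    proof (cases "i = length w")
      case False
      hence "drop i w \<noteq> []" using i by auto
      thus ?thesis using False by simp
    qed simp
  qed
  thus "fmult a (\<lambda>w. if w = [] then 1 else 0) w = a w" by simp
qed

lemma fmult_distl: "fmult (\<lambda>w. x w + y w) z = (\<lambda>w. fmult x z w + fmult y z w)"
  by (rule ext) (simp add: fmult_def shift_add distrib_right sum.distrib)

lemma fmult_distr: "fmult z (\<lambda>w. x w + y w) = (\<lambda>w. fmult z x w + fmult z y w)"
  by (rule ext) (simp add: fmult_def distrib_left sum.distrib)

lemma ring_FA: "ring FA"
proof (rule ringI)
  show "abelian_group FA"
  proof (rule abelian_groupI)
    fix x y assume "x \<in> carrier FA" "y \<in> carrier FA"
    thus "x \<oplus>\<^bsub>FA\<^esub> y \<in> carrier FA"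
      unfolding carrier_FA add_FA
    proof (intro conjI allI)
      assume a: "finite {w. x w \<noteq> 0} \<and> (\<forall>w. x w \<in> Ubar)" "finite {w. y w \<noteq> 0} \<and> (\<forall>w. y w \<in> Ubar)"
      show "finite {w. x w + y w \<noteq> 0}"
        by (rule finite_subset[of _ "{w. x w \<noteq> 0} \<union> {w. y w \<noteq> 0}"]) (use a in auto)
      fix w show "x w + y w \<in> Ubar" using a by (simp add: Ubar_add)
    qed
  next
    show "\<zero>\<^bsub>FA\<^esub> \<in> carrier FA" by (simp add: carrier_FA zero_FA Ubar_0)
  next
    fix x assume x: "x \<in> carrier FA"
    have "(\<lambda>w. - x w) \<in> carrier FA" using x by (simp add: carrier_FA Ubar_uminus)
    moreover have "(\<lambda>w. - x w) \<oplus>\<^bsub>FA\<^esub> x = \<zero>\<^bsub>FA\<^esub>" by (simp add: add_FA zero_FA)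
    ultimately show "\<exists>y\<in>carrier FA. y \<oplus>\<^bsub>FA\<^esub> x = \<zero>\<^bsub>FA\<^esub>" by blast
  qed (auto simp: add_FA zero_FA add_ac)
next
  show "monoid FA"
  proof (rule monoidI)
    show "\<one>\<^bsub>FA\<^esub> \<in> carrier FA" by (simp add: carrier_FA one_FA Ubar_0 Ubar_1)
  qed (simp_all add: mult_FA one_FA fmult_carrier fmult_assoc fmult_one_left fmult_one_right)
qed (simp_all add: mult_FA add_FA fmult_distl fmult_distr)

section \<open>A representation of \<open>DR(sl\<^sub>2)\<close>\<close>

text \<open>
  \<open>DR(sl\<^sub>2)\<close> acts on arrays \<open>m n k\<close> of rational functions: \<open>z\<^sub>+\<close> and \<open>t\<close> raise the indices
  \<open>n\<close> and \<open>k\<close>, \<open>z\<^sub>-\<close> lowers \<open>n\<close>, and a scalar \<open>f\<close> acts at level \<open>n\<close> as \<open>f(h + 2n)\<close>.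
  The recursions for \<open>zm_act0\<close> and \<open>zm_act2\<close> are what the second defining relation forces.
\<close>

type_synonym arr = "nat \<Rightarrow> nat \<Rightarrow> rf"

definition arr_zero :: arr where "arr_zero = (\<lambda>n k. 0)"
definition arr_add :: "arr \<Rightarrow> arr \<Rightarrow> arr" where "arr_add x y = (\<lambda>n k. x n k + y n k)"
definition arr_sum :: "'a set \<Rightarrow> ('a \<Rightarrow> arr) \<Rightarrow> arr" where "arr_sum S F = (\<lambda>n k. \<Sum>s\<in>S. F s n k)"

definition additive_op :: "(arr \<Rightarrow> arr) \<Rightarrow> bool" where
  "additive_op Op \<longleftrightarrow> (\<forall>x y. Op (arr_add x y) = arr_add (Op x) (Op y)) \<and> Op arr_zero = arr_zero"

lemma additive_op_arr_sum: assumes lo: "additive_op Op" shows "finite S \<Longrightarrow> Op (arr_sum S F) = arr_sum S (\<lambda>s. Op (F s))"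
proof (induct S rule: finite_induct)
  case empty thus ?case using lo by (simp add: arr_sum_def additive_op_def flip: arr_zero_def)
next
  case (insert x S)
  have "arr_sum (insert x S) F = arr_add (F x) (arr_sum S F)" using insert by (simp add: arr_sum_def arr_add_def)
  moreover have "arr_sum (insert x S) (\<lambda>s. Op (F s)) = arr_add (Op (F x)) (arr_sum S (\<lambda>s. Op (F s)))"
    using insert by (simp add: arr_sum_def arr_add_def)
  ultimately show ?case using insert lo by (simp add: additive_op_def)
qed

lemma additive_op_comp: "additive_op Op1 \<Longrightarrow> additive_op Op2 \<Longrightarrow> additive_op (Op1 \<circ> Op2)"
  by (simp add: additive_op_def)

definition h_at :: "nat \<Rightarrow> rf" where "h_at n = hvar + of_nat (2 * n)"

definition zmzp_coeff :: "rf \<Rightarrow> rf" where "zmzp_coeff x = x * (x + 3) / ((x + 1) * (x + 2))"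

fun zm_act0 :: "nat \<Rightarrow> rf" where
  "zm_act0 0 = 0"
| "zm_act0 (Suc n) = (zm_act0 n - h_at n) / zmzp_coeff (h_at n)"

fun zm_act2 :: "nat \<Rightarrow> rf" where
  "zm_act2 0 = 0"
| "zm_act2 (Suc n) = (zm_act2 n + inverse (h_at n * (h_at n + 2)^2)) / zmzp_coeff (h_at n)"

declare zm_act0.simps(2)[simp del] zm_act2.simps(2)[simp del]

definition act_scalar :: "rf \<Rightarrow> arr \<Rightarrow> arr" where "act_scalar f m = (\<lambda>n k. shift (2 * int n) f * m n k)"

fun act_gen :: "gen \<Rightarrow> arr \<Rightarrow> arr" where
  "act_gen Zp m = (\<lambda>n k. if n = 0 then 0 else m (n - 1) k)"
| "act_gen T m = (\<lambda>n k. if k = 0 then 0 else inverse (h_at n + 2) * m n (k - 1))"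
| "act_gen Zm m = (\<lambda>n k. zm_act0 (Suc n) * m (Suc n) k + (if 2 \<le> k then zm_act2 (Suc n) * m (Suc n) (k - 2) else 0))"

fun act_word :: "gen list \<Rightarrow> arr \<Rightarrow> arr" where
  "act_word [] m = m"
| "act_word (g # w) m = act_gen g (act_word w m)"

lemma additive_op_act_gen: "additive_op (act_gen g)"
  by (cases g) (auto simp: additive_op_def arr_add_def arr_zero_def algebra_simps intro!: ext)

lemma additive_op_act_scalar: "additive_op (act_scalar f)"
  by (auto simp: additive_op_def arr_add_def arr_zero_def act_scalar_def algebra_simps intro!: ext)

lemma additive_op_act_word: "additive_op (act_word w)"
proof (induct w)
  case Nil thus ?case by (simp add: additive_op_def)
next
  case (Cons g w)
  have "act_word (g # w) = act_gen g \<circ> act_word w" by (rule ext) simp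
  thus ?case using Cons additive_op_act_gen additive_op_comp by metis
qed

lemma act_word_append: "act_word (u @ v) m = act_word u (act_word v m)"
  by (induct u) auto

lemma act_scalar_mult: "act_scalar (f * g) m = act_scalar f (act_scalar g m)"
  by (simp add: act_scalar_def shift_mult mult.assoc)
lemma act_scalar_add: "act_scalar (f + g) m = arr_add (act_scalar f m) (act_scalar g m)"
  by (simp add: act_scalar_def arr_add_def shift_add distrib_right)
lemma act_scalar_0: "act_scalar 0 m = arr_zero"
  by (simp add: act_scalar_def arr_zero_def shift_0)
lemma act_scalar_sum: "finite S \<Longrightarrow> act_scalar (sum F S) m = arr_sum S (\<lambda>s. act_scalar (F s) m)"
proof (induct S rule: finite_induct)
  case empty thus ?case by (simp add: arr_sum_def act_scalar_0 arr_zero_def)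
next
  case (insert x S) thus ?case by (simp add: act_scalar_add arr_sum_def arr_add_def)
qed

lemma act_scalar_act_gen: "act_scalar f (act_gen g m) = act_gen g (act_scalar (shift (gwt g) f) m)"
proof (cases g)
  case Zp thus ?thesis
    by (auto simp: act_scalar_def shift_shift intro!: ext)
next
  case Zm thus ?thesis
    by (auto simp: act_scalar_def shift_shift algebra_simps intro!: ext)
next
  case T thus ?thesis
    by (auto simp: act_scalar_def algebra_simps intro!: ext)
qed

lemma act_scalar_act_word: "act_scalar f (act_word w m) = act_word w (act_scalar (shift (wt w) f) m)"
  by (induct w arbitrary: f) (simp_all add: act_scalar_act_gen shift_shift add.commute)

definition act :: "(gen list \<Rightarrow> rf) \<Rightarrow> arr \<Rightarrow> arr" where
  "act a m = arr_sum {w. a w \<noteq> 0} (\<lambda>w. act_word w (act_scalar (a w) m))"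

lemma act_word_arr_zero: "act_word w arr_zero = arr_zero" using additive_op_act_word[of w] by (simp add: additive_op_def)
lemma act_scalar_arr_zero: "act_scalar f arr_zero = arr_zero" by (simp add: act_scalar_def arr_zero_def)
lemma act_word_zero_apply: "act_word w (\<lambda>n k. 0) n k = 0" using act_word_arr_zero[of w] by (simp add: arr_zero_def fun_eq_iff)

lemma act_eq_arr_sum:
  assumes "finite S" "{w. a w \<noteq> 0} \<subseteq> S"
  shows "act a m = arr_sum S (\<lambda>w. act_word w (act_scalar (a w) m))"
  unfolding act_def arr_sum_def
proof (intro ext)
  fix n k
  show "(\<Sum>w\<in>{w. a w \<noteq> 0}. act_word w (act_scalar (a w) m) n k) = (\<Sum>w\<in>S. act_word w (act_scalar (a w) m) n k)"
    by (rule sum.mono_neutral_left) (use assms in \<open>auto simp: act_scalar_0 act_word_zero_apply arr_zero_def\<close>)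
qed

lemma act_word_fmult:
  "act_word w (act_scalar (fmult a b w) m) =
    arr_sum {0..length w} (\<lambda>i. act_word (take i w) (act_scalar (a (take i w))
      (act_word (drop i w) (act_scalar (b (drop i w)) m))))"
proof -
  have "act_word w (act_scalar (shift (wt (drop i w)) (a (take i w)) * b (drop i w)) m)
      = act_word (take i w) (act_scalar (a (take i w)) (act_word (drop i w) (act_scalar (b (drop i w)) m)))" for i
    using act_word_append[of "take i w" "drop i w"] by (simp add: act_scalar_mult act_scalar_act_word)
  then show ?thesis
    by (simp add: fmult_def act_scalar_sum additive_op_arr_sum additive_op_act_word)
qed

lemma act_mult:
  assumes fa: "finite {w. a w \<noteq> 0}" and fb: "finite {w. b w \<noteq> 0}"
  shows "act (fmult a b) m = act a (act b m)"
proof -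
  let ?A = "{w. a w \<noteq> 0}" and ?B = "{w. b w \<noteq> 0}"
  let ?W = "(\<lambda>(u,v). u @ v) ` (?A \<times> ?B)"
  define T where "T u v = act_word u (act_scalar (a u) (act_word v (act_scalar (b v) m)))" for u v
  have T0: "T u v n k \<noteq> 0 \<Longrightarrow> u \<in> ?A \<and> v \<in> ?B" for u v n k
    by (cases "a u = 0"; cases "b v = 0")
      (simp_all add: T_def act_scalar_0 act_word_arr_zero act_scalar_arr_zero, simp_all add: arr_zero_def)
  have "act (fmult a b) m = arr_sum ?W (\<lambda>w. arr_sum {0..length w} (\<lambda>i. T (take i w) (drop i w)))"
    using fa fb by (subst act_eq_arr_sum[OF _ fmult_supp]) (auto simp: act_word_fmult T_def)
  moreover have "act a (act b m) = arr_sum ?A (\<lambda>u. arr_sum ?B (\<lambda>v. T u v))"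
    using fb by (simp add: act_def T_def additive_op_arr_sum additive_op_act_word additive_op_act_scalar)
  moreover have "(\<Sum>w\<in>?W. \<Sum>i\<in>{0..length w}. T (take i w) (drop i w) n k) = (\<Sum>u\<in>?A. \<Sum>v\<in>?B. T u v n k)" for n k
    by (rule sum_append_splits[OF fa fb]) (use T0 in blast)
  ultimately show ?thesis by (simp add: arr_sum_def)
qed

lemma act_arr_zero: "act a arr_zero = arr_zero"
  unfolding act_def act_scalar_arr_zero act_word_arr_zero by (simp add: arr_sum_def arr_zero_def)

lemma act_add:
  assumes fa: "finite {w. a w \<noteq> 0}" and fb: "finite {w. b w \<noteq> 0}"
  shows "act (\<lambda>w. a w + b w) m = arr_add (act a m) (act b m)"
proof -
  let ?S = "{w. a w \<noteq> 0} \<union> {w. b w \<noteq> 0}"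
  have f: "finite ?S" using fa fb by simp
  have "act (\<lambda>w. a w + b w) m = arr_sum ?S (\<lambda>w. act_word w (act_scalar (a w + b w) m))"
    by (rule act_eq_arr_sum[OF f]) auto
  moreover have "act a m = arr_sum ?S (\<lambda>w. act_word w (act_scalar (a w) m))" by (rule act_eq_arr_sum[OF f]) auto
  moreover have "act b m = arr_sum ?S (\<lambda>w. act_word w (act_scalar (b w) m))" by (rule act_eq_arr_sum[OF f]) auto
  moreover have "act_word w (act_scalar (a w + b w) m) = arr_add (act_word w (act_scalar (a w) m)) (act_word w (act_scalar (b w) m))" for w
    using additive_op_act_word[of w] by (simp add: act_scalar_add additive_op_def)
  ultimately show ?thesis by (simp add: arr_sum_def arr_add_def sum.distrib)
qed

lemma act_zero: "act (\<lambda>w. 0) m = arr_zero"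
  by (simp add: act_def arr_sum_def arr_zero_def)

lemma FA_minus:
  assumes "x \<in> carrier FA" shows "\<ominus>\<^bsub>FA\<^esub> x = (\<lambda>w. - x w)"
proof -
  interpret ring FA by (rule ring_FA)
  have "(\<lambda>w. - x w) \<in> carrier FA" using assms by (simp add: carrier_FA Ubar_uminus)
  moreover have "(\<lambda>w. - x w) \<oplus>\<^bsub>FA\<^esub> x = \<zero>\<^bsub>FA\<^esub>" by (simp add: add_FA zero_FA)
  ultimately show ?thesis using assms by (simp add: minus_equality)
qed

lemma act_uminus_eq_zero:
  assumes "x \<in> carrier FA" "act x m = arr_zero"
  shows "act (\<lambda>w. - x w) m = arr_zero"
proof -
  have "act (\<lambda>w. x w + - x w) m = arr_add (act x m) (act (\<lambda>w. - x w) m)"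
    using assms(1) by (intro act_add) (auto simp: carrier_FA)
  then have "arr_zero = arr_add arr_zero (act (\<lambda>w. - x w) m)" using assms(2) by (simp add: act_zero)
  then show ?thesis by (simp add: arr_add_def arr_zero_def)
qed

definition act_kernel :: "(gen list \<Rightarrow> rf) set" where
  "act_kernel = {a \<in> carrier FA. \<forall>m. act a m = arr_zero}"

lemma ideal_act_kernel: "ideal act_kernel FA"
proof (rule idealI[OF ring_FA])
  show "subgroup act_kernel (add_monoid FA)"
  proof
    show "act_kernel \<subseteq> carrier (add_monoid FA)" by (auto simp: act_kernel_def)
  next
    fix x y assume x: "x \<in> act_kernel" and y: "y \<in> act_kernel"
    hence "x \<oplus>\<^bsub>FA\<^esub> y \<in> carrier FA" using ring.ring_simprules(1)[OF ring_FA] by (auto simp: act_kernel_def)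
    moreover have "act (x \<oplus>\<^bsub>FA\<^esub> y) m = arr_zero" for m
      using x y by (auto simp: act_kernel_def add_FA carrier_FA act_add arr_add_def arr_zero_def)
    ultimately show "x \<otimes>\<^bsub>add_monoid FA\<^esub> y \<in> act_kernel" by (simp add: act_kernel_def)
  next
    show "\<one>\<^bsub>add_monoid FA\<^esub> \<in> act_kernel"
      using ring.ring_simprules(2)[OF ring_FA] by (simp add: act_kernel_def zero_FA act_zero)
  next
    fix x assume x: "x \<in> act_kernel"
    hence xc: "x \<in> carrier FA" by (simp add: act_kernel_def)
    have "inv\<^bsub>add_monoid FA\<^esub> x = (\<lambda>w. - x w)"
      using FA_minus[OF xc] by (simp add: a_inv_def)
    moreover have "(\<lambda>w. - x w) \<in> carrier FA" using xc by (simp add: carrier_FA Ubar_uminus)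
    moreover have "act (\<lambda>w. - x w) m = arr_zero" for m
      using x by (simp add: act_kernel_def act_uminus_eq_zero)
    ultimately show "inv\<^bsub>add_monoid FA\<^esub> x \<in> act_kernel" by (simp add: act_kernel_def)
  qed
next
  fix a x assume a: "a \<in> act_kernel" and x: "x \<in> carrier FA"
  have ac: "a \<in> carrier FA" using a by (simp add: act_kernel_def)
  have fa: "finite {w. a w \<noteq> 0}" and fx: "finite {w. x w \<noteq> 0}" using ac x by (auto simp: carrier_FA)
  have r: "\<forall>m. act a m = arr_zero" using a by (simp add: act_kernel_def)
  show "x \<otimes>\<^bsub>FA\<^esub> a \<in> act_kernel"
    using fmult_carrier[OF x ac] r by (simp add: act_kernel_def mult_FA act_mult[OF fx fa] act_arr_zero)
  show "a \<otimes>\<^bsub>FA\<^esub> x \<in> act_kernel"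
    using fmult_carrier[OF ac x] r by (simp add: act_kernel_def mult_FA act_mult[OF fa fx] act_arr_zero)
qed

definition at_level :: "nat \<Rightarrow> rf \<Rightarrow> rf" where "at_level n f = shift (2 * int n) f"

lemma at_level_add[simp]: "at_level n (f + g) = at_level n f + at_level n g" by (simp add: at_level_def shift_add)
lemma at_level_mult[simp]: "at_level n (f * g) = at_level n f * at_level n g" by (simp add: at_level_def shift_mult)
lemma at_level_uminus[simp]: "at_level n (- f) = - at_level n f" by (simp add: at_level_def shift_uminus)
lemma at_level_divide[simp]: "at_level n (f / g) = at_level n f / at_level n g" by (simp add: at_level_def shift_divide)
lemma at_level_inverse[simp]: "at_level n (inverse f) = inverse (at_level n f)" by (simp add: at_level_def shift_inverse)
lemma at_level_0[simp]: "at_level n 0 = 0" by (simp add: at_level_def shift_0)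
lemma at_level_1[simp]: "at_level n 1 = 1" by (simp add: at_level_def shift_1)
lemma at_level_numeral[simp]: "at_level n (numeral j) = numeral j" by (simp add: at_level_def shift_numeral)
lemma at_level_hvar[simp]: "at_level n hvar = h_at n" by (simp add: at_level_def shift_hvar h_at_def)

lemma act_scalar_apply: "act_scalar f m n k = at_level n f * m n k" by (simp add: act_scalar_def at_level_def)

lemma h_at_Suc[simp]: "h_at (Suc n) = h_at n + 2" by (simp add: h_at_def)
lemma h_at_eq: "h_at n = hvar + of_int (2 * int n)" by (simp add: h_at_def)
lemma h_at_plus_int_nz: "h_at n + of_int j \<noteq> 0"
  using hvar_plus_int_nz[of "2 * int n + j"] by (simp add: h_at_eq add.assoc)
lemma h_at_nz[simp]: "h_at n \<noteq> 0" using h_at_plus_int_nz[of n 0] by simp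
lemma h_at_plus_nz[simp]: "h_at n + numeral j \<noteq> 0" using h_at_plus_int_nz[of n "numeral j"] by simp
lemma h_at_plus1_nz[simp]: "h_at n + 1 \<noteq> 0" using h_at_plus_int_nz[of n 1] by simp
lemma h_at_comm: "numeral j + h_at n = h_at n + numeral j" "1 + h_at n = h_at n + 1" by (simp_all add: add.commute)

lemma zmzp_coeff_nz[simp]: "zmzp_coeff (h_at n) \<noteq> 0"
proof -
  have "h_at n + 3 \<noteq> 0" by (rule h_at_plus_nz)
  thus ?thesis by (simp add: zmzp_coeff_def)
qed

lemma zm_act0_rec: "zm_act0 (Suc n) * zmzp_coeff (h_at n) = zm_act0 n - h_at n" by (simp add: zm_act0.simps(2))
lemma zm_act2_rec: "zm_act2 (Suc n) * zmzp_coeff (h_at n) = zm_act2 n + inverse (h_at n * (h_at n + 2)^2)" by (simp add: zm_act2.simps(2))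

lemma mono_apply: "mono w f v = (if v = w then f else 0)" by (simp add: mono_def)

lemma FA_carrierI:
  assumes "finite S" "\<And>v. v \<notin> S \<Longrightarrow> a v = 0" "\<And>v. a v \<in> Ubar"
  shows "a \<in> carrier FA"
  using assms by (auto simp: carrier_FA intro: finite_subset[of _ S])

definition rel1 where "rel1 = (\<lambda>v. mono [Zp, T] 1 v - mono [T, Zp] ((hvar + 4) / (hvar + 2)) v)"
definition rel2 where "rel2 = (\<lambda>v. mono [Zp, Zm] 1 v - mono [] hvar v + mono [T, T] (1 / hvar) v
            - mono [Zm, Zp] (hvar * (hvar + 3) / ((hvar + 1) * (hvar + 2))) v)"
definition rel3 where "rel3 = (\<lambda>v. mono [T, Zm] 1 v - mono [Zm, T] ((hvar + 2) / hvar) v)"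

lemma rels_eq: "rels = {rel1, rel2, rel3}" by (simp add: rels_def rel1_def rel2_def rel3_def)

lemma Ubar_frac: "f \<in> Ubar \<Longrightarrow> f / (hvar + numeral j) \<in> Ubar"
  by (simp add: divide_inverse Ubar_mult Ubar_inv_plus)

lemma rel1_carrier: "rel1 \<in> carrier FA"
  by (rule FA_carrierI[of "{[Zp,T],[T,Zp]}"])
     (auto simp: rel1_def mono_apply Ubar_0 Ubar_1 Ubar_uminus Ubar_frac Ubar_add Ubar_hvar Ubar_numeral)

lemma rel1_act: "act rel1 m = arr_zero"
proof -
  have "act rel1 m = arr_sum {[Zp,T],[T,Zp]} (\<lambda>w. act_word w (act_scalar (rel1 w) m))"
    by (rule act_eq_arr_sum) (auto simp: rel1_def mono_apply)
  also have "\<dots> = arr_zero"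
  proof (intro ext)
    fix n k
    show "arr_sum {[Zp,T],[T,Zp]} (\<lambda>w. act_word w (act_scalar (rel1 w) m)) n k = arr_zero n k"
    proof (cases n; cases k)
      fix n' k' assume "n = Suc n'" "k = Suc k'"
      thus ?thesis by (simp add: arr_sum_def arr_zero_def rel1_def mono_apply act_scalar_apply h_at_comm) (simp add: divide_simps)
    qed (simp_all add: arr_sum_def arr_zero_def rel1_def mono_apply act_scalar_apply)
  qed
  finally show ?thesis .
qed

lemma at_level_zmzp_coeff: "at_level n (zmzp_coeff f) = zmzp_coeff (at_level n f)"
  by (simp add: zmzp_coeff_def)

lemma rel2_eq: "rel2 = (\<lambda>v. mono [Zp, Zm] 1 v - mono [] hvar v + mono [T, T] (1 / hvar) v - mono [Zm, Zp] (zmzp_coeff hvar) v)"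
  by (simp add: rel2_def zmzp_coeff_def)

lemma Ubar_zmzp_coeff_hvar: "zmzp_coeff hvar \<in> Ubar"
  unfolding zmzp_coeff_def divide_inverse
  by (intro Ubar_mult Ubar_add Ubar_hvar Ubar_numeral Ubar_1)
     (metis Ubar_inv_lin Ubar_mult inverse_mult_distrib of_int_1 of_int_numeral)

lemma rel2_carrier: "rel2 \<in> carrier FA"
  by (rule FA_carrierI[of "{[Zp,Zm],[],[T,T],[Zm,Zp]}"])
     (auto simp: rel2_eq mono_apply Ubar_0 Ubar_1 Ubar_uminus Ubar_add Ubar_hvar Ubar_numeral
        Ubar_zmzp_coeff_hvar Ubar_inv_hvar Ubar_diff divide_inverse)

lemma act_word_ZpZm: "act_word [Zp, Zm] x n k = zm_act0 n * x n k + (if 2 \<le> k then zm_act2 n * x n (k - 2) else 0)"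
  by (cases n) simp_all

lemma act_word_ZmZp_scalar: "act_word [Zm, Zp] (act_scalar f m) n k
   = zm_act0 (Suc n) * at_level n f * m n k + (if 2 \<le> k then zm_act2 (Suc n) * at_level n f * m n (k - 2) else 0)"
  by (simp add: act_scalar_apply mult.assoc)

lemma act_word_TT: "act_word [T, T] x n k = (if 2 \<le> k then inverse (h_at n + 2) ^ 2 * x n (k - 2) else 0)"
  by (cases k; cases "k - 1") (simp_all add: power2_eq_square numeral_2_eq_2)

lemma rel2_act: "act rel2 m = arr_zero"
proof -
  let ?S = "{[Zp,Zm],[],[T,T],[Zm,Zp]}"
  have "act rel2 m = arr_sum ?S (\<lambda>w. act_word w (act_scalar (rel2 w) m))"
    by (rule act_eq_arr_sum) (auto simp: rel2_eq mono_apply)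
  also have "\<dots> = arr_zero"
  proof (intro ext)
    fix n k
    have e: "arr_sum ?S (\<lambda>w. act_word w (act_scalar (rel2 w) m)) n k
      = act_word [Zp,Zm] (act_scalar 1 m) n k + act_word [] (act_scalar (- hvar) m) n k + act_word [T,T] (act_scalar (1 / hvar) m) n k
        + act_word [Zm,Zp] (act_scalar (- zmzp_coeff hvar) m) n k"
      by (simp add: arr_sum_def rel2_eq mono_apply add.assoc)
    also have "\<dots> = (zm_act0 n - h_at n - zm_act0 (Suc n) * zmzp_coeff (h_at n)) * m n k
        + (if 2 \<le> k then (zm_act2 n + inverse (h_at n + 2) ^ 2 * inverse (h_at n) - zm_act2 (Suc n) * zmzp_coeff (h_at n)) * m n (k - 2) else 0)"
      unfolding act_word_ZpZm act_word_ZmZp_scalar act_word_TT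
      by (simp add: act_scalar_apply at_level_zmzp_coeff algebra_simps divide_inverse)
    also have "\<dots> = 0"
      by (simp add: zm_act0_rec zm_act2_rec inverse_mult_distrib power_inverse)
    finally show "arr_sum ?S (\<lambda>w. act_word w (act_scalar (rel2 w) m)) n k = arr_zero n k" by (simp add: arr_zero_def)
  qed
  finally show ?thesis .
qed

lemma rel3_carrier: "rel3 \<in> carrier FA"
  by (rule FA_carrierI[of "{[T,Zm],[Zm,T]}"])
     (auto simp: rel3_def mono_apply Ubar_0 Ubar_1 Ubar_uminus Ubar_add Ubar_hvar Ubar_numeral
        Ubar_inv_hvar divide_inverse Ubar_mult)

lemma rel3_act: "act rel3 m = arr_zero"
proof -
  have "act rel3 m = arr_sum {[T,Zm],[Zm,T]} (\<lambda>w. act_word w (act_scalar (rel3 w) m))"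
    by (rule act_eq_arr_sum) (auto simp: rel3_def mono_apply)
  also have "\<dots> = arr_zero"
  proof (intro ext)
    fix n k
    have "k = 0 \<or> k = 1 \<or> k = 2 \<or> (\<exists>j. k = Suc (Suc (Suc j)))" by presburger
    then show "arr_sum {[T,Zm],[Zm,T]} (\<lambda>w. act_word w (act_scalar (rel3 w) m)) n k = arr_zero n k"
      by (elim disjE exE; simp add: arr_sum_def arr_zero_def rel3_def mono_apply act_scalar_apply h_at_comm,
          (simp add: divide_simps)?)
  qed
  finally show ?thesis .
qed

lemma rel1_in_act_kernel: "rel1 \<in> act_kernel" by (simp add: act_kernel_def rel1_carrier rel1_act)
lemma rel2_in_act_kernel: "rel2 \<in> act_kernel" by (simp add: act_kernel_def rel2_carrier rel2_act)
lemma rel3_in_act_kernel: "rel3 \<in> act_kernel" by (simp add: act_kernel_def rel3_carrier rel3_act)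

lemma rels_carrier: "rels \<subseteq> carrier FA"
  by (simp add: rels_eq rel1_carrier rel2_carrier rel3_carrier)

lemma ideal_DR: "ideal DRideal FA"
  unfolding DRideal_def by (rule ring.genideal_ideal[OF ring_FA rels_carrier])

lemma DRideal_Ker: "DRideal \<subseteq> act_kernel"
  unfolding DRideal_def
  by (rule ring.genideal_minimal[OF ring_FA ideal_act_kernel])
     (simp add: rels_eq rel1_in_act_kernel rel2_in_act_kernel rel3_in_act_kernel)

lemma DRideal_act: "a \<in> DRideal \<Longrightarrow> act a m = arr_zero"
  using DRideal_Ker by (auto simp: act_kernel_def)

section \<open>Computing in \<open>DR(sl\<^sub>2)\<close>\<close>

abbreviation cmono :: "gen list \<Rightarrow> rf \<Rightarrow> (gen list \<Rightarrow> rf) set" where "cmono w f \<equiv> cls (mono w f)"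

lemma mono_carrier: "f \<in> Ubar \<Longrightarrow> mono w f \<in> carrier FA"
  by (rule FA_carrierI[of "{w}"]) (auto simp: mono_apply Ubar_0)

lemma mono_mult: "fmult (mono u f) (mono v g) = mono (u @ v) (shift (wt v) f * g)"
proof
  fix w
  show "fmult (mono u f) (mono v g) w = mono (u @ v) (shift (wt v) f * g) w"
  proof (cases "w = u @ v")
    case True
    have "fmult (mono u f) (mono v g) w = (\<Sum>i\<in>{0..length w}. if i = length u then shift (wt v) f * g else 0)"
      unfolding fmult_def
    proof (rule sum.cong[OF refl])
      fix i assume i: "i \<in> {0..length w}"
      show "shift (wt (drop i w)) (mono u f (take i w)) * mono v g (drop i w) = (if i = length u then shift (wt v) f * g else 0)"
      proof (cases "i = length u")
        case False
        have "take i w \<noteq> u \<or> drop i w \<noteq> v"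
        proof (rule ccontr)
          assume "\<not> ?thesis"
          hence "take i w = u" by simp
          hence "length u = i" using i by auto
          thus False using False by simp
        qed
        thus ?thesis using False by (auto simp: mono_apply shift_0)
      qed (simp add: True mono_apply)
    qed
    thus ?thesis using True by (simp add: mono_apply)
  next
    case False
    have "fmult (mono u f) (mono v g) w = (\<Sum>i\<in>{0..length w}. 0)"
      unfolding fmult_def
    proof (rule sum.cong[OF refl])
      fix i
      have "take i w \<noteq> u \<or> drop i w \<noteq> v" using False by (metis append_take_drop_id)
      thus "shift (wt (drop i w)) (mono u f (take i w)) * mono v g (drop i w) = 0"
        by (auto simp: mono_apply shift_0)
    qed
    thus ?thesis using False by (simp add: mono_apply)
  qed
qed

lemma fmult_mono_Nil_right: "fmult a (mono [] g) = (\<lambda>w. a w * g)"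
proof
  fix w
  have "fmult a (mono [] g) w = (\<Sum>i\<in>{0..length w}. if i = length w then a w * g else 0)"
    unfolding fmult_def
  proof (rule sum.cong[OF refl])
    fix i assume i: "i \<in> {0..length w}"
    show "shift (wt (drop i w)) (a (take i w)) * mono [] g (drop i w) = (if i = length w then a w * g else 0)"
    proof (cases "i = length w")
      case False
      hence "drop i w \<noteq> []" using i by auto
      thus ?thesis using False by (simp add: mono_apply)
    qed (simp add: mono_apply)
  qed
  thus "fmult a (mono [] g) w = a w * g" by simp
qed

lemma DRideal_abelian_subgroup: "abelian_subgroup DRideal FA"
  by (rule abelian_subgroupI3[OF ideal.axioms(1)[OF ideal_DR] ring.is_abelian_group[OF ring_FA]])

lemma cls_carrier: "x \<in> carrier FA \<Longrightarrow> cls x \<in> carrier DR"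
  by (simp add: cls_def DR_def FactRing_def A_RCOSETS_def' a_r_coset_def[symmetric]) blast

lemma cls_mult: "x \<in> carrier FA \<Longrightarrow> y \<in> carrier FA \<Longrightarrow> cls x \<otimes>\<^bsub>DR\<^esub> cls y = cls (fmult x y)"
  by (simp add: cls_def DR_def FactRing_def ideal.rcoset_mult_add[OF ideal_DR] mult_FA)

lemma cls_add: "x \<in> carrier FA \<Longrightarrow> y \<in> carrier FA \<Longrightarrow> cls x \<oplus>\<^bsub>DR\<^esub> cls y = cls (\<lambda>w. x w + y w)"
  by (simp add: cls_def DR_def FactRing_def ideal.a_rcos_sum[OF ideal_DR] add_FA)

lemma cmono_mult: "f \<in> Ubar \<Longrightarrow> g \<in> Ubar \<Longrightarrow> cmono u f \<otimes>\<^bsub>DR\<^esub> cmono v g = cmono (u @ v) (shift (wt v) f * g)"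
  by (simp add: cls_mult mono_carrier mono_mult)

lemma cmono_add: "f \<in> Ubar \<Longrightarrow> g \<in> Ubar \<Longrightarrow> cmono w f \<oplus>\<^bsub>DR\<^esub> cmono w g = cmono w (f + g)"
proof -
  assume "f \<in> Ubar" "g \<in> Ubar"
  hence "cmono w f \<oplus>\<^bsub>DR\<^esub> cmono w g = cls (\<lambda>v. mono w f v + mono w g v)" by (simp add: cls_add mono_carrier)
  also have "(\<lambda>v. mono w f v + mono w g v) = mono w (f + g)" by (auto simp: mono_apply)
  finally show ?thesis .
qed

lemma DRideal_zero: "(\<lambda>w. 0) \<in> DRideal"
  using additive_subgroup.zero_closed[OF ideal.axioms(1)[OF ideal_DR]] by (simp add: zero_FA)

lemma DRideal_carrier: "a \<in> DRideal \<Longrightarrow> a \<in> carrier FA"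
  using ideal.Icarr[OF ideal_DR] by blast

lemma mem_cls_self: "x \<in> carrier FA \<Longrightarrow> x \<in> cls x"
  unfolding cls_def a_r_coset_def' using DRideal_zero
  by (auto simp: add_FA intro!: bexI[of _ "\<lambda>w. 0"])

lemma cls_eq_act:
  assumes x: "x \<in> carrier FA" and y: "y \<in> carrier FA" and e: "cls x = cls y"
  shows "act x m = act y m"
proof -
  have "x \<in> cls y" using mem_cls_self[OF x] e by simp
  then obtain i where i: "i \<in> DRideal" and xi: "x = i \<oplus>\<^bsub>FA\<^esub> y"
    unfolding cls_def a_r_coset_def' by auto
  have ic: "i \<in> carrier FA" using DRideal_carrier[OF i] .
  have "act x m = arr_add (act i m) (act y m)"
    using xi ic y by (simp add: add_FA act_add carrier_FA)
  also have "\<dots> = act y m" using DRideal_act[OF i] by (simp add: arr_add_def arr_zero_def)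
  finally show ?thesis .
qed

lemma cls_eqI:
  assumes x: "x \<in> carrier FA" and y: "y \<in> carrier FA" and d: "(\<lambda>w. x w - y w) \<in> DRideal"
  shows "cls x = cls y"
proof -
  have "x = (\<lambda>w. x w - y w) \<oplus>\<^bsub>FA\<^esub> y" by (simp add: add_FA)
  hence "x \<in> cls y" unfolding cls_def a_r_coset_def' using d by blast
  thus ?thesis unfolding cls_def
    using abelian_subgroup.a_repr_independence'[OF DRideal_abelian_subgroup] y by metis
qed

lemma act_mono: "act (mono w f) m = act_word w (act_scalar f m)"
proof -
  have "act (mono w f) m = arr_sum {w} (\<lambda>v. act_word v (act_scalar (mono w f v) m))"
    by (rule act_eq_arr_sum) (auto simp: mono_apply)
  thus ?thesis by (simp add: arr_sum_def mono_apply)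
qed

section \<open>Automorphisms of the given form\<close>

lemma hvar_shifts_nonzero:
  "hvar \<noteq> 0" "hvar + 1 \<noteq> 0" "hvar + 2 \<noteq> 0" "hvar + 3 \<noteq> 0" "hvar + 4 \<noteq> 0" "hvar - 1 \<noteq> 0"
  using hvar_nz hvar_plus_int_nz[of 2] hvar_plus_int_nz[of 3] hvar_plus_int_nz[of 4]
    hvar_plus_int_nz[of 1] hvar_plus_int_nz[of "-1"] by auto

lemma zmzp_coeff_hvar_cleared: "zmzp_coeff hvar * (hvar * (hvar + 1) * (hvar + 2)) = hvar * hvar * (hvar + 3)"
proof -
  have "x * (x + 3) / (u * v) * (x * u * v) = x * x * (x + 3)" if "u \<noteq> 0" "v \<noteq> 0" for x u v :: rf
    using that by (simp add: field_simps)
  from this[where x=hvar and u="hvar + 1" and v="hvar + 2"] show ?thesis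
    using hvar_shifts_nonzero by (simp add: zmzp_coeff_def)
qed

lemma zmzp_coeff_hvar_times: "(hvar + 2) * zmzp_coeff hvar / hvar = (hvar + 3) / (hvar + 1)"
proof -
  have "v * (x * (x + 3) / (u * v)) / x = (x + 3) / u" if "x \<noteq> 0" "u \<noteq> 0" "v \<noteq> 0" for x u v :: rf
    using that by (simp add: field_simps)
  from this[where x=hvar and u="hvar + 1" and v="hvar + 2"] show ?thesis
    using hvar_shifts_nonzero by (simp add: zmzp_coeff_def)
qed

lemma act_cong: "x \<in> carrier FA \<Longrightarrow> y \<in> carrier FA \<Longrightarrow> cls x = cls y \<Longrightarrow> act x m n k = act y m n k"
  using cls_eq_act by metis

lemma cmono_eq_act_word_eq:
  "cmono u f = cmono v g \<Longrightarrow> f \<in> Ubar \<Longrightarrow> g \<in> Ubar \<Longrightarrow>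
    act_word u (act_scalar f m) n k = act_word v (act_scalar g m) n k"
  using act_cong[of "mono u f" "mono v g" m n k] by (simp add: mono_carrier act_mono)

lemma act_mono_add:
  "f \<in> Ubar \<Longrightarrow> g \<in> Ubar \<Longrightarrow>
    act (\<lambda>w. mono u f w + mono v g w) m n k = act_word u (act_scalar f m) n k + act_word v (act_scalar g m) n k"
  using act_add[of "mono u f" "mono v g" m] mono_carrier[of f u] mono_carrier[of g v]
  by (simp add: carrier_FA act_mono arr_add_def)

lemma cls_mono_add:
  "f \<in> Ubar \<Longrightarrow> g \<in> Ubar \<Longrightarrow> cls (\<lambda>w. mono u f w + mono v g w) = cmono u f \<oplus>\<^bsub>DR\<^esub> cmono v g"
  by (simp add: cls_add mono_carrier)

lemma mono_add_carrier: "f \<in> Ubar \<Longrightarrow> g \<in> Ubar \<Longrightarrow> (\<lambda>w. mono u f w + mono v g w) \<in> carrier FA"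
  using ring.ring_simprules(1)[OF ring_FA, of "mono u f" "mono v g"] mono_carrier[of f u] mono_carrier[of g v]
  by (simp add: add_FA)

lemma rels_DRideal: "r \<in> rels \<Longrightarrow> r \<in> DRideal"
  using ring.genideal_self[OF ring_FA rels_carrier] by (auto simp: DRideal_def)

lemma DRideal_mult_scalar: "r \<in> DRideal \<Longrightarrow> g \<in> Ubar \<Longrightarrow> (\<lambda>w. r w * g) \<in> DRideal"
  using ideal.I_r_closed[OF ideal_DR, of r "mono [] g"] mono_carrier[of g "[]"]
  by (simp add: mult_FA fmult_mono_Nil_right)

lemma DR_rel1_cleared: "cmono [Zp, T] (hvar + 2) = cmono [T, Zp] (hvar + 4)"
proof (rule cls_eqI)
  show "mono [Zp, T] (hvar + 2) \<in> carrier FA" "mono [T, Zp] (hvar + 4) \<in> carrier FA"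
    by (auto intro!: mono_carrier Ubar_add Ubar_hvar Ubar_numeral)
  have "(\<lambda>w. rel1 w * (hvar + 2)) \<in> DRideal"
    by (rule DRideal_mult_scalar) (auto intro!: rels_DRideal Ubar_add Ubar_hvar Ubar_numeral simp: rels_eq)
  moreover have "(\<lambda>w. rel1 w * (hvar + 2)) = (\<lambda>w. mono [Zp, T] (hvar + 2) w - mono [T, Zp] (hvar + 4) w)"
    using hvar_shifts_nonzero by (auto simp: rel1_def mono_apply)
  ultimately show "(\<lambda>w. mono [Zp, T] (hvar + 2) w - mono [T, Zp] (hvar + 4) w) \<in> DRideal" by simp
qed

lemma DR_rel2_cleared:
  "cls (\<lambda>w. mono [Zp, Zm] (hvar * (hvar + 1) * (hvar + 2)) w + mono [T, T] ((hvar + 1) * (hvar + 2)) w)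
   = cls (\<lambda>w. mono [] (hvar * (hvar * (hvar + 1) * (hvar + 2))) w + mono [Zm, Zp] (hvar * hvar * (hvar + 3)) w)"
  (is "cls ?l = cls ?r")
proof (rule cls_eqI)
  let ?P = "hvar * (hvar + 1) * (hvar + 2)"
  have U: "?P \<in> Ubar" "(hvar + 1) * (hvar + 2) \<in> Ubar" "hvar * hvar * (hvar + 3) \<in> Ubar" "hvar * ?P \<in> Ubar"
    by (intro Ubar_mult Ubar_add Ubar_hvar Ubar_numeral Ubar_1)+
  then show "?l \<in> carrier FA" "?r \<in> carrier FA" by (auto intro!: mono_add_carrier)
  have "(\<lambda>w. rel2 w * ?P) \<in> DRideal"
    by (rule DRideal_mult_scalar) (auto intro!: rels_DRideal U simp: rels_eq)
  moreover have "(\<lambda>w. rel2 w * ?P) = (\<lambda>w. ?l w - ?r w)"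
  proof
    fix w
    have "zmzp_coeff hvar * ?P = hvar * hvar * (hvar + 3)" "1 / hvar * ?P = (hvar + 1) * (hvar + 2)"
      using zmzp_coeff_hvar_cleared hvar_shifts_nonzero by simp_all
    then show "rel2 w * ?P = ?l w - ?r w"
      unfolding rel2_eq mono_apply by (auto simp: algebra_simps)
  qed
  ultimately show "(\<lambda>w. ?l w - ?r w) \<in> DRideal" by simp
qed

lemma cst_numeral: "cst (numeral n) = numeral n"
  by (simp add: cst_def rf_of_poly_numeral[symmetric] numeral_poly)

lemma cst_one: "cst 1 = 1" by (simp add: cst_def One_fract_def one_pCons)
lemma cst_zero: "cst 0 = 0" by (simp add: cst_def Zero_fract_def)

lemma zm_act0_1: "zm_act0 1 = - hvar / zmzp_coeff hvar"
  by (simp add: zm_act0.simps(2) h_at_def)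
lemma zm_act2_1: "zm_act2 1 = inverse (hvar * (hvar + 2)^2) / zmzp_coeff hvar"
  by (simp add: zm_act2.simps(2) h_at_def)
lemma zm_act0_1_nz: "zm_act0 1 \<noteq> 0"
  using zmzp_coeff_nz[of 0] hvar_nz by (simp add: zm_act0.simps(2) h_at_def)

abbreviation unit_arr :: "nat \<Rightarrow> nat \<Rightarrow> arr" where
  "unit_arr i j \<equiv> (\<lambda>n k. if n = i \<and> k = j then 1 else 0)"

lemma act_Zm_unit_arr: "act_word [Zm] (act_scalar g (unit_arr 1 0)) 0 0 = zm_act0 1 * shift 2 g"
  by (simp add: act_scalar_apply at_level_def)
lemma act_ZmT_unit_arr:
  "act_word [Zm, T] (act_scalar g (unit_arr 1 0)) 0 1 = zm_act0 1 * inverse (hvar + 4) * shift 2 g"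
  by (simp add: act_scalar_apply at_level_def h_at_def)
lemma act_TZm_unit_arr:
  "act_word [T, Zm] (act_scalar g (unit_arr 1 0)) 0 1 = inverse (hvar + 2) * zm_act0 1 * shift 2 g"
  by (simp add: act_scalar_apply at_level_def h_at_def)
lemma act_ZmZp_unit_arr:
  "act_word [Zm, Zp] (act_scalar g (unit_arr 0 0)) 0 0 = zm_act0 1 * g"
  "act_word [Zm, Zp] (act_scalar g (unit_arr 0 0)) 0 2 = zm_act2 1 * g"
  by (simp_all add: act_scalar_apply at_level_def)
lemma act_TT_unit_arr:
  "act_word [T, T] (act_scalar g (unit_arr 0 0)) 0 0 = 0"
  "act_word [T, T] (act_scalar g (unit_arr 0 0)) 0 2 = inverse (hvar + 2) ^ 2 * g"
  by (simp_all add: act_scalar_apply at_level_def h_at_def numeral_2_eq_2 power2_eq_square)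
lemma act_Nil_unit_arr:
  "act_word [] (act_scalar g (unit_arr 0 0)) 0 0 = g"
  "act_word [] (act_scalar g (unit_arr 0 0)) 0 2 = 0"
  by (simp_all add: act_scalar_apply at_level_def)
lemma act_ZpZm_unit_arr: "act_word [Zp, Zm] (act_scalar g (unit_arr 0 0)) 0 k = 0"
  by (simp add: act_scalar_apply)

definition maps_scalar :: "((gen list \<Rightarrow> rf) set \<Rightarrow> (gen list \<Rightarrow> rf) set) \<Rightarrow> rf \<Rightarrow> rf \<Rightarrow> bool" where
  "maps_scalar \<phi> a a' \<longleftrightarrow> a \<in> Ubar \<and> a' \<in> Ubar \<and> \<phi> (cmono [] a) = cmono [] a'"

lemma ring_hom_cmono_mult:
  "\<phi> \<in> ring_hom DR DR \<Longrightarrow> f \<in> Ubar \<Longrightarrow> g \<in> Ubar \<Longrightarrow>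
    \<phi> (cmono u f \<otimes>\<^bsub>DR\<^esub> cmono v g) = \<phi> (cmono u f) \<otimes>\<^bsub>DR\<^esub> \<phi> (cmono v g)"
  by (rule ring_hom_mult) (auto intro: cls_carrier mono_carrier)

lemma ring_hom_cmono_add:
  "\<phi> \<in> ring_hom DR DR \<Longrightarrow> f \<in> Ubar \<Longrightarrow> g \<in> Ubar \<Longrightarrow>
    \<phi> (cmono u f \<oplus>\<^bsub>DR\<^esub> cmono v g) = \<phi> (cmono u f) \<oplus>\<^bsub>DR\<^esub> \<phi> (cmono v g)"
  by (rule ring_hom_add) (auto intro: cls_carrier mono_carrier)

lemma maps_scalar_mult:
  "\<phi> \<in> ring_hom DR DR \<Longrightarrow> maps_scalar \<phi> a a' \<Longrightarrow> maps_scalar \<phi> b b' \<Longrightarrow> maps_scalar \<phi> (a * b) (a' * b')"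
  unfolding maps_scalar_def by (metis cmono_mult shift_zero wt_Nil append_Nil ring_hom_cmono_mult Ubar_mult)

lemma maps_scalar_add:
  "\<phi> \<in> ring_hom DR DR \<Longrightarrow> maps_scalar \<phi> a a' \<Longrightarrow> maps_scalar \<phi> b b' \<Longrightarrow> maps_scalar \<phi> (a + b) (a' + b')"
  unfolding maps_scalar_def by (metis cmono_add ring_hom_cmono_add Ubar_add)

locale DR_aut_of_form =
  fixes \<phi> :: "(gen list \<Rightarrow> rf) set \<Rightarrow> (gen list \<Rightarrow> rf) set" and f1 f2 f3 f4 :: rf
  assumes coeffs_Ubar: "f1 \<in> Ubar" "f2 \<in> Ubar" "f3 \<in> Ubar" "f4 \<in> Ubar"
    and aut: "DR_alg_aut \<phi>"
    and h_image: "\<phi> (cmono [] hvar) = cmono [] f1"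
    and t_image: "\<phi> (cmono [T] 1) = cmono [T] f2"
    and zp_image: "\<phi> (cmono [Zp] 1) = cmono [Zm] f3"
    and zm_image: "\<phi> (cmono [Zm] 1) = cmono [Zp] f4"
begin

lemma hom: "\<phi> \<in> ring_hom DR DR"
  using aut by (simp add: DR_alg_aut_def ring_iso_def)

lemma inj: "inj_on \<phi> (carrier DR)"
  using aut by (simp add: DR_alg_aut_def ring_iso_def bij_betw_def)

lemma maps_cst: "maps_scalar \<phi> (cst c) (cst c)"
  using aut by (simp add: DR_alg_aut_def maps_scalar_def Ubar_cst)

lemma maps_numeral: "maps_scalar \<phi> (numeral n) (numeral n)"
  using maps_cst[of "numeral n"] by (simp add: cst_numeral)

lemma maps_one: "maps_scalar \<phi> 1 1"
  using maps_cst[of 1] by (simp add: cst_one)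

lemma maps_hvar: "maps_scalar \<phi> hvar f1"
  using h_image coeffs_Ubar by (simp add: maps_scalar_def Ubar_hvar)

lemma maps_hvar_poly:
  "maps_scalar \<phi> (hvar + 2) (f1 + 2)"
  "maps_scalar \<phi> (hvar + 4) (f1 + 4)"
  "maps_scalar \<phi> (hvar * (hvar + 1) * (hvar + 2)) (f1 * (f1 + 1) * (f1 + 2))"
  "maps_scalar \<phi> ((hvar + 1) * (hvar + 2)) ((f1 + 1) * (f1 + 2))"
  "maps_scalar \<phi> (hvar * hvar * (hvar + 3)) (f1 * f1 * (f1 + 3))"
  "maps_scalar \<phi> (hvar * (hvar * (hvar + 1) * (hvar + 2))) (f1 * (f1 * (f1 + 1) * (f1 + 2)))"
  by (intro maps_scalar_mult[OF hom] maps_scalar_add[OF hom] maps_hvar maps_numeral maps_one)+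

lemma image_cmono_append:
  assumes "\<phi> (cmono u 1) = cmono u' c" "\<phi> (cmono v 1) = cmono v' d" "c \<in> Ubar" "d \<in> Ubar"
  shows "\<phi> (cmono (u @ v) 1) = cmono (u' @ v') (shift (wt v') c * d)"
proof -
  have "cmono (u @ v) 1 = cmono u 1 \<otimes>\<^bsub>DR\<^esub> cmono v 1" by (simp add: cmono_mult Ubar_1 shift_1)
  then show ?thesis using assms ring_hom_cmono_mult[OF hom Ubar_1 Ubar_1] by (simp add: cmono_mult)
qed

lemma image_cmono_scalar:
  assumes "\<phi> (cmono w 1) = cmono w' c" "c \<in> Ubar" "maps_scalar \<phi> a a'"
  shows "\<phi> (cmono w a) = cmono w' (c * a')"
proof -
  have "cmono w a = cmono w 1 \<otimes>\<^bsub>DR\<^esub> cmono [] a"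
    using assms(3) by (simp add: maps_scalar_def cmono_mult shift_1 Ubar_1)
  then show ?thesis
    using assms ring_hom_cmono_mult[OF hom Ubar_1, of a w "[]"] by (simp add: maps_scalar_def cmono_mult)
qed

text \<open>This is the only place where injectivity of \<open>\<phi>\<close> is used.\<close>

lemma f3_nonzero: "f3 \<noteq> 0"
proof
  assume "f3 = 0"
  then have "\<phi> (cmono [Zp] 0) = \<phi> (cmono [Zp] 1)"
    using image_cmono_scalar[OF zp_image _ maps_cst[of 0]] coeffs_Ubar zp_image by (simp add: cst_zero)
  then have "cmono [Zp] 0 = cmono [Zp] 1"
    using inj by (simp add: inj_on_def cls_carrier mono_carrier Ubar_0 Ubar_1)
  then have "act_word [Zp] (act_scalar 0 (unit_arr 0 0)) 1 0 = act_word [Zp] (act_scalar 1 (unit_arr 0 0)) 1 0"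
    by (rule cmono_eq_act_word_eq[OF _ Ubar_0 Ubar_1])
  then show False by (simp add: act_scalar_apply)
qed

lemma f1_weight: "shift 2 f1 = f1 - 2"
proof -
  have "cmono [] hvar \<otimes>\<^bsub>DR\<^esub> cmono [Zp] 1 = cmono [Zp] (hvar + 2)"
    by (simp add: cmono_mult shift_hvar Ubar_hvar Ubar_1)
  from arg_cong[OF this, of \<phi>] have "cmono [Zm] (shift (-2) f1 * f3) = cmono [Zm] (f3 * (f1 + 2))"
    using ring_hom_cmono_mult[OF hom Ubar_hvar Ubar_1] h_image zp_image coeffs_Ubar
      image_cmono_scalar[OF zp_image _ maps_hvar_poly(1)]
    by (simp add: cmono_mult)
  then have "act_word [Zm] (act_scalar (shift (-2) f1 * f3) (unit_arr 1 0)) 0 0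
      = act_word [Zm] (act_scalar (f3 * (f1 + 2)) (unit_arr 1 0)) 0 0"
    by (rule cmono_eq_act_word_eq) (use coeffs_Ubar in \<open>auto intro: Ubar_mult Ubar_shift Ubar_add Ubar_numeral\<close>)
  then have "shift 2 f3 * f1 = shift 2 f3 * (shift 2 f1 + 2)"
    unfolding act_Zm_unit_arr using zm_act0_1_nz
    by (simp add: shift_mult shift_shift shift_add shift_numeral mult.commute)
  moreover have "shift 2 f3 \<noteq> 0" using f3_nonzero by (simp add: shift_eq_0)
  ultimately have "f1 = shift 2 f1 + 2" by simp
  then show ?thesis by (simp add: algebra_simps)
qed

lemma f1_nonzero: "f1 \<noteq> 0" "f1 + 1 \<noteq> 0" "f1 + 2 \<noteq> 0"
proof -
  have "f1 \<noteq> of_int c" for c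
    using f1_weight by (auto simp: shift_of_int)
  from this[of 0] this[of "-1"] this[of "-2"] show "f1 \<noteq> 0" "f1 + 1 \<noteq> 0" "f1 + 2 \<noteq> 0"
    by (auto simp: eq_neg_iff_add_eq_0)
qed

lemma rel1_image: "shift 2 f3 * shift 2 f2 * f1 / (hvar + 4) = f2 * shift 2 f3 * (f1 + 2) / (hvar + 2)"
proof -
  have ZpT: "\<phi> (cmono [Zp, T] 1) = cmono [Zm, T] (f3 * f2)"
    using image_cmono_append[OF zp_image t_image] coeffs_Ubar by simp
  have TZp: "\<phi> (cmono [T, Zp] 1) = cmono [T, Zm] (shift (-2) f2 * f3)"
    using image_cmono_append[OF t_image zp_image] coeffs_Ubar by simp
  have "cmono [Zm, T] (f3 * f2 * (f1 + 2)) = cmono [T, Zm] (shift (-2) f2 * f3 * (f1 + 4))"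
    using DR_rel1_cleared coeffs_Ubar
      image_cmono_scalar[OF ZpT _ maps_hvar_poly(1)] image_cmono_scalar[OF TZp _ maps_hvar_poly(2)]
    by (simp add: Ubar_mult Ubar_shift)
  then have "act_word [Zm, T] (act_scalar (f3 * f2 * (f1 + 2)) (unit_arr 1 0)) 0 1
      = act_word [T, Zm] (act_scalar (shift (-2) f2 * f3 * (f1 + 4)) (unit_arr 1 0)) 0 1"
    by (rule cmono_eq_act_word_eq) (use coeffs_Ubar in \<open>auto intro: Ubar_mult Ubar_shift Ubar_add Ubar_numeral\<close>)
  then have "zm_act0 1 * inverse (hvar + 4) * shift 2 (f3 * f2 * (f1 + 2))
      = inverse (hvar + 2) * zm_act0 1 * shift 2 (shift (-2) f2 * f3 * (f1 + 4))"
    unfolding act_ZmT_unit_arr act_TZm_unit_arr .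
  moreover have "shift 2 (f3 * f2 * (f1 + 2)) = shift 2 f3 * shift 2 f2 * f1"
    using f1_weight by (simp add: shift_mult shift_add shift_numeral)
  moreover have "shift 2 (shift (-2) f2 * f3 * (f1 + 4)) = f2 * shift 2 f3 * (f1 + 2)"
    using f1_weight by (simp add: shift_mult shift_add shift_numeral shift_shift)
  ultimately have "zm_act0 1 * (shift 2 f3 * shift 2 f2 * f1 / (hvar + 4))
      = zm_act0 1 * (f2 * shift 2 f3 * (f1 + 2) / (hvar + 2))"
    by (simp add: divide_inverse mult_ac)
  then show ?thesis by (simp only: mult_left_cancel[OF zm_act0_1_nz])
qed

text \<open>
  On the unit array at \<open>(0, 0)\<close>, the entries at \<open>k = 0\<close> and \<open>k = 2\<close> see the \<open>z\<^sub>- z\<^sub>+\<close> term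
  through \<open>zm_act0 1\<close> and \<open>zm_act2 1\<close>, while \<open>t t\<close> contributes only at \<open>k = 2\<close>.
\<close>

lemma rel2_image:
  defines "A \<equiv> shift 2 f3 * f4 * (f1 * (f1 + 1) * (f1 + 2))"
  shows "zm_act0 1 * A = f1 * (f1 * (f1 + 1) * (f1 + 2))"
    and "zm_act2 1 * A + inverse (hvar + 2) ^ 2 * (f2 * f2 * ((f1 + 1) * (f1 + 2))) = 0"
proof -
  let ?b = "f2 * f2 * ((f1 + 1) * (f1 + 2))" and ?c = "f1 * (f1 * (f1 + 1) * (f1 + 2))"
    and ?d = "shift (-2) f4 * f3 * (f1 * f1 * (f1 + 3))"
  have U: "A \<in> Ubar" "?b \<in> Ubar" "?c \<in> Ubar" "?d \<in> Ubar"
    using coeffs_Ubar maps_hvar_poly unfolding A_def maps_scalar_def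
    by (auto intro!: Ubar_mult Ubar_shift)
  have "\<phi> (cmono [Zp, Zm] 1) = cmono [Zm, Zp] (shift 2 f3 * f4)"
    and "\<phi> (cmono [T, T] 1) = cmono [T, T] (f2 * f2)"
    and "\<phi> (cmono [Zm, Zp] 1) = cmono [Zp, Zm] (shift (-2) f4 * f3)"
    using image_cmono_append[OF zp_image zm_image] image_cmono_append[OF t_image t_image]
      image_cmono_append[OF zm_image zp_image] coeffs_Ubar by simp_all
  from image_cmono_scalar[OF this(1) _ maps_hvar_poly(3)] image_cmono_scalar[OF this(2) _ maps_hvar_poly(4)]
    image_cmono_scalar[OF this(3) _ maps_hvar_poly(5)]
  have cls_eq: "cls (\<lambda>w. mono [Zm, Zp] A w + mono [T, T] ?b w) = cls (\<lambda>w. mono [] ?c w + mono [Zp, Zm] ?d w)"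
    using arg_cong[OF DR_rel2_cleared, of \<phi>] maps_hvar_poly(6) U coeffs_Ubar
    by (simp add: cls_mono_add ring_hom_cmono_add[OF hom] Ubar_mult Ubar_shift Ubar_hvar Ubar_add
        Ubar_numeral Ubar_1 maps_scalar_def A_def mult.assoc)
  have "act (\<lambda>w. mono [Zm, Zp] A w + mono [T, T] ?b w) (unit_arr 0 0) 0 k
      = act (\<lambda>w. mono [] ?c w + mono [Zp, Zm] ?d w) (unit_arr 0 0) 0 k" for k
    by (rule act_cong[OF _ _ cls_eq]) (use U in \<open>auto intro: mono_add_carrier\<close>)
  from this[of 0] this[of 2] show "zm_act0 1 * A = ?c" "zm_act2 1 * A + inverse (hvar + 2) ^ 2 * ?b = 0"
    unfolding act_mono_add[OF U(1,2)] act_mono_add[OF U(3,4)]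
      act_ZmZp_unit_arr act_TT_unit_arr act_Nil_unit_arr act_ZpZm_unit_arr
    by simp_all
qed

lemma zmzp_coeff_hvar_nz: "zmzp_coeff hvar \<noteq> 0"
  using zmzp_coeff_nz[of 0] by (simp add: h_at_def)

lemma f3_f4_product: "shift 2 f3 * f4 = - (f1 * zmzp_coeff hvar / hvar)"
proof -
  have "(- hvar / zmzp_coeff hvar * (shift 2 f3 * f4)) * (f1 * (f1 + 1) * (f1 + 2)) = f1 * (f1 * (f1 + 1) * (f1 + 2))"
    using rel2_image(1) unfolding zm_act0_1 by (simp only: mult.assoc)
  then have "- hvar / zmzp_coeff hvar * (shift 2 f3 * f4) = f1"
    by (subst (asm) mult_cancel_right) (use f1_nonzero in simp)
  moreover have "shift 2 f3 * f4 = (- hvar / zmzp_coeff hvar * (shift 2 f3 * f4)) * (- zmzp_coeff hvar / hvar)"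
    using hvar_nz zmzp_coeff_hvar_nz by (simp add: field_simps)
  ultimately show ?thesis by simp
qed

lemma f2_square: "f2 * f2 * (hvar * hvar) = f1 * f1"
proof -
  have "inverse (x * y ^ 2) / c * (- (a * c / x) * (a * (a + 1) * (a + 2))) + inverse y ^ 2 * (b * ((a + 1) * (a + 2)))
      = (b * (x * x) - a * a) * ((a + 1) * (a + 2)) / (x * x * y ^ 2)"
    if "x \<noteq> 0" "y \<noteq> 0" "c \<noteq> 0" for x y c a b :: rf
    using that by (simp add: field_simps power2_eq_square)
  from this[where x=hvar and y="hvar + 2" and c="zmzp_coeff hvar" and a=f1 and b="f2 * f2"]
  have "(f2 * f2 * (hvar * hvar) - f1 * f1) * ((f1 + 1) * (f1 + 2)) / (hvar * hvar * (hvar + 2) ^ 2) = 0"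
    using rel2_image(2)[unfolded f3_f4_product zm_act2_1] hvar_shifts_nonzero zmzp_coeff_hvar_nz
    by simp
  then show ?thesis
    using f1_nonzero hvar_shifts_nonzero by simp
qed

lemma f2_sign:
  obtains \<epsilon> where "\<epsilon> \<in> {1, -1}" "f2 = \<epsilon> * (f1 / hvar)"
proof -
  have "(f2 - f1 / hvar) * (f2 + f1 / hvar) = 0"
    using f2_square hvar_nz by (simp add: field_simps)
  then have "f2 = f1 / hvar \<or> f2 = - (f1 / hvar)"
    by (auto simp: eq_neg_iff_add_eq_0)
  then show ?thesis
    using that[of 1] that[of "-1"] by auto
qed

lemma f1_eq: "f1 = - hvar - 2"
proof -
  obtain \<epsilon> where \<epsilon>: "\<epsilon> \<in> {1, -1}" and f2: "f2 = \<epsilon> * (f1 / hvar)" by (rule f2_sign)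
  have "S * e * f * ((f - 2) * x - (f + 2) * v) = 0"
    if "S * (e * ((f - 2) / u)) * f / v = e * (f / x) * S * (f + 2) / u" "x \<noteq> 0" "u \<noteq> 0" "v \<noteq> 0"
    for S e f x u v :: rf
  proof -
    have "S * (e * ((f - 2) / u)) * f / v - e * (f / x) * S * (f + 2) / u
        = S * e * f * ((f - 2) * x - (f + 2) * v) / (u * v * x)"
      using that(2-4) by (simp add: field_simps)
    then show ?thesis using that by simp
  qed
  moreover have "shift 2 f2 = \<epsilon> * ((f1 - 2) / (hvar + 2))"
    using f2 \<epsilon> f1_weight by (auto simp: shift_mult shift_divide shift_hvar shift_1 shift_uminus)
  ultimately have "shift 2 f3 * \<epsilon> * f1 * ((f1 - 2) * hvar - (f1 + 2) * (hvar + 4)) = 0"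
    using rel1_image hvar_shifts_nonzero unfolding f2 by auto
  moreover have "shift 2 f3 \<noteq> 0" using f3_nonzero by (simp add: shift_eq_0)
  moreover have "\<epsilon> \<noteq> 0" using \<epsilon> by auto
  ultimately have "(f1 - 2) * hvar - (f1 + 2) * (hvar + 4) = 0"
    using f1_nonzero by simp
  then have "4 * (f1 - (- hvar - 2)) = 0" by (simp add: algebra_simps)
  then show ?thesis by (simp only: mult_eq_0_iff right_minus_eq) simp
qed

theorem coeffs_form:
  "\<exists>\<beta> \<gamma>. \<beta> \<in> {1, -1} \<and> \<gamma> \<noteq> 0 \<and> f1 = - hvar - 2 \<and> f2 = \<beta> * (hvar + 2) / hvar \<and>
     f3 = 1 / ((hvar - 1) * \<gamma>) \<and> f4 = (hvar + 3) * shift 2 \<gamma>"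
proof -
  obtain \<epsilon> where \<epsilon>: "\<epsilon> \<in> {1, -1}" and f2: "f2 = \<epsilon> * (f1 / hvar)" by (rule f2_sign)
  define \<gamma> where "\<gamma> = inverse ((hvar - 1) * f3)"
  have "- \<epsilon> \<in> {1, -1}" using \<epsilon> by auto
  moreover have "\<gamma> \<noteq> 0" using f3_nonzero hvar_shifts_nonzero by (simp add: \<gamma>_def)
  moreover have "f2 = - \<epsilon> * (hvar + 2) / hvar" using f2 f1_eq by (simp add: field_simps)
  moreover have "f3 = 1 / ((hvar - 1) * \<gamma>)"
    using hvar_shifts_nonzero by (simp add: \<gamma>_def field_simps)
  moreover have "f4 = (hvar + 3) * shift 2 \<gamma>"
  proof -
    have "- (f1 * zmzp_coeff hvar / hvar) = (hvar + 2) * zmzp_coeff hvar / hvar"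
      using hvar_nz by (simp add: f1_eq field_simps)
    then have prod: "shift 2 f3 * f4 = (hvar + 3) / (hvar + 1)"
      using f3_f4_product zmzp_coeff_hvar_times by simp
    have "f4 = (shift 2 f3 * f4) * inverse (shift 2 f3)"
      using f3_nonzero by (simp add: shift_eq_0)
    also have "\<dots> = (hvar + 3) * inverse ((hvar + 1) * shift 2 f3)"
      unfolding prod by (simp add: divide_inverse inverse_mult_distrib mult_ac)
    also have "inverse ((hvar + 1) * shift 2 f3) = shift 2 \<gamma>"
      by (simp add: \<gamma>_def shift_inverse shift_mult shift_diff shift_hvar shift_1 add.assoc)
    finally show ?thesis .
  qed
  ultimately show ?thesis using f1_eq by blast
qed

end

section \<open>Construction of the automorphisms\<close>

fun swap :: "gen \<Rightarrow> gen" where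
  "swap Zp = Zm" | "swap Zm = Zp" | "swap T = T"

lemma swap_swap[simp]: "swap (swap g) = g" by (cases g) simp_all
lemma swap_comp_swap[simp]: "swap \<circ> swap = id" by (rule ext) simp
lemma gwt_swap[simp]: "gwt (swap g) = - gwt g" by (cases g) simp_all
lemma map_swap_swap[simp]: "map swap (map swap w) = w" by (induct w) simp_all
lemma wt_swap[simp]: "wt (map swap w) = - wt w" by (induct w) simp_all

text \<open>
  \<open>twist \<beta> \<gamma>\<close> is the lift to the free ring of \<open>f(h) \<mapsto> f(-h - 2)\<close>, \<open>t \<mapsto> t \<diamond> t_coeff \<beta>\<close>,
  \<open>z\<^sub>+ \<mapsto> z\<^sub>- \<diamond> zp_coeff \<gamma>\<close>, \<open>z\<^sub>- \<mapsto> z\<^sub>+ \<diamond> zm_coeff \<gamma>\<close>; \<open>twist_coeff \<beta> \<gamma> w\<close> collects the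
  coefficients picked up by the word \<open>w\<close> when they are moved to the right.
\<close>

definition t_coeff :: "rf \<Rightarrow> rf" where "t_coeff \<beta> = \<beta> * (hvar + 2) / hvar"
definition zp_coeff :: "rf \<Rightarrow> rf" where "zp_coeff \<gamma> = 1 / ((hvar - 1) * \<gamma>)"
definition zm_coeff :: "rf \<Rightarrow> rf" where "zm_coeff \<gamma> = (hvar + 3) * shift 2 \<gamma>"

fun gen_coeff :: "rf \<Rightarrow> rf \<Rightarrow> gen \<Rightarrow> rf" where
  "gen_coeff \<beta> \<gamma> T = t_coeff \<beta>" | "gen_coeff \<beta> \<gamma> Zp = zp_coeff \<gamma>" | "gen_coeff \<beta> \<gamma> Zm = zm_coeff \<gamma>"

fun twist_coeff :: "rf \<Rightarrow> rf \<Rightarrow> gen list \<Rightarrow> rf" where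
  "twist_coeff \<beta> \<gamma> [] = 1"
| "twist_coeff \<beta> \<gamma> (g # w) = shift (- wt w) (gen_coeff \<beta> \<gamma> g) * twist_coeff \<beta> \<gamma> w"

definition twist :: "rf \<Rightarrow> rf \<Rightarrow> (gen list \<Rightarrow> rf) \<Rightarrow> (gen list \<Rightarrow> rf)" where
  "twist \<beta> \<gamma> a = (\<lambda>v. twist_coeff \<beta> \<gamma> (map swap v) * reflect (a (map swap v)))"

lemma twist_coeff_append: "twist_coeff \<beta> \<gamma> (u @ w) = shift (- wt w) (twist_coeff \<beta> \<gamma> u) * twist_coeff \<beta> \<gamma> w"
  by (induct u) (simp_all add: shift_1 shift_mult shift_shift mult_ac add.commute)

lemma reflect_sum: "reflect (sum f A) = (\<Sum>x\<in>A. reflect (f x))"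
  by (induct A rule: infinite_finite_induct) (simp_all add: reflect_0 reflect_add)

lemma twist_mult: "twist \<beta> \<gamma> (fmult a b) = fmult (twist \<beta> \<gamma> a) (twist \<beta> \<gamma> b)"
proof
  fix v
  let ?s = "map swap v"
  have "twist \<beta> \<gamma> (fmult a b) v
     = (\<Sum>i\<in>{0..length v}. twist_coeff \<beta> \<gamma> ?s * reflect (shift (wt (drop i ?s)) (a (take i ?s)) * b (drop i ?s)))"
    by (simp add: twist_def fmult_def reflect_sum sum_distrib_left)
  also have "\<dots> = (\<Sum>i\<in>{0..length v}. shift (wt (drop i v)) (twist \<beta> \<gamma> a (take i v)) * twist \<beta> \<gamma> b (drop i v))"
  proof (rule sum.cong[OF refl])
    fix i
    have d: "drop i ?s = map swap (drop i v)" "take i ?s = map swap (take i v)" by (simp_all add: drop_map take_map)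
    have "twist_coeff \<beta> \<gamma> ?s = twist_coeff \<beta> \<gamma> (take i ?s @ drop i ?s)" by (simp only: append_take_drop_id)
    also have "\<dots> = shift (- wt (drop i ?s)) (twist_coeff \<beta> \<gamma> (take i ?s)) * twist_coeff \<beta> \<gamma> (drop i ?s)" by (rule twist_coeff_append)
    finally have "twist_coeff \<beta> \<gamma> ?s = shift (wt (drop i v)) (twist_coeff \<beta> \<gamma> (take i ?s)) * twist_coeff \<beta> \<gamma> (drop i ?s)"
      using d by simp
    thus "twist_coeff \<beta> \<gamma> ?s * reflect (shift (wt (drop i ?s)) (a (take i ?s)) * b (drop i ?s))
        = shift (wt (drop i v)) (twist \<beta> \<gamma> a (take i v)) * twist \<beta> \<gamma> b (drop i v)"
      using d by (simp add: twist_def reflect_mult reflect_shift shift_mult mult_ac)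
  qed
  also have "\<dots> = fmult (twist \<beta> \<gamma> a) (twist \<beta> \<gamma> b) v" by (simp add: fmult_def)
  finally show "twist \<beta> \<gamma> (fmult a b) v = fmult (twist \<beta> \<gamma> a) (twist \<beta> \<gamma> b) v" .
qed

lemma twist_add: "twist \<beta> \<gamma> (\<lambda>w. a w + b w) = (\<lambda>w. twist \<beta> \<gamma> a w + twist \<beta> \<gamma> b w)"
  by (simp add: twist_def reflect_add distrib_left)

lemma twist_one: "twist \<beta> \<gamma> (\<lambda>w. if w = [] then 1 else 0) = (\<lambda>w. if w = [] then 1 else 0)"
  by (auto simp: twist_def reflect_1 reflect_0 intro!: ext)

lemma twist_mono: "twist \<beta> \<gamma> (mono w f) = mono (map swap w) (twist_coeff \<beta> \<gamma> w * reflect f)"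
  by (auto simp: twist_def mono_apply reflect_0 intro!: ext)

definition dual_param :: "rf \<Rightarrow> rf" where "dual_param \<gamma> = - reflect (shift 2 \<gamma>)"

lemma dual_param_dual_param: "dual_param (dual_param \<gamma>) = \<gamma>"
  by (simp add: dual_param_def reflect_uminus shift_uminus reflect_shift reflect_reflect shift_shift)

lemma reflect_dual_param: "reflect (dual_param \<gamma>) = - shift 2 \<gamma>"
  by (simp add: dual_param_def reflect_uminus reflect_reflect)

lemma shift_dual_param: "shift 2 (dual_param \<gamma>) = - reflect \<gamma>"
  by (simp add: dual_param_def shift_uminus reflect_shift shift_shift)

lemma dual_param_nz: "\<gamma> \<noteq> 0 \<Longrightarrow> dual_param \<gamma> \<noteq> 0"
  by (simp add: dual_param_def reflect_eq_0 shift_eq_0)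

lemma sign_mult_self: "\<beta> \<in> {1, -1} \<Longrightarrow> \<beta> * \<beta> = (1::rf)" by auto
lemma reflect_beta: "\<beta> \<in> {1, -1} \<Longrightarrow> reflect \<beta> = \<beta>" by (auto simp: reflect_1 reflect_uminus)

lemma gen_coeff_T_inverse: assumes "\<beta> \<in> {1, -1}" shows "t_coeff \<beta> * reflect (t_coeff \<beta>) = 1"
proof -
  have "reflect (t_coeff \<beta>) = \<beta> * (- hvar) / (- (hvar + 2))"
    using assms by (simp add: t_coeff_def reflect_mult reflect_divide reflect_add reflect_hvar reflect_numeral reflect_beta algebra_simps)
  hence "t_coeff \<beta> * reflect (t_coeff \<beta>) = \<beta> * (hvar + 2) / hvar * (\<beta> * (- hvar) / (- (hvar + 2)))"
    by (simp only: t_coeff_def)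
  also have "\<dots> = 1"
  proof -
    have "b * u / x * (b * (- x) / (- u)) = 1" if "x \<noteq> 0" "u \<noteq> 0" "b * b = 1" for b x u :: rf
      using that by (simp add: field_simps)
    from this[where b=\<beta> and x=hvar and u="hvar + 2"] show ?thesis using sign_mult_self[OF assms] hvar_shifts_nonzero by simp
  qed
  finally show ?thesis .
qed

lemma gen_coeff_Zp_inverse: assumes "\<gamma> \<noteq> 0" shows "zm_coeff \<gamma> * reflect (zp_coeff (dual_param \<gamma>)) = 1"
proof -
  have "reflect (hvar - 1) = - (hvar + 3)" by (simp add: reflect_diff reflect_hvar reflect_1 algebra_simps)
  hence "reflect (zp_coeff (dual_param \<gamma>)) = 1 / ((- (hvar + 3)) * (- shift 2 \<gamma>))"
    by (simp add: zp_coeff_def reflect_divide reflect_mult reflect_1 reflect_dual_param)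
  hence "zm_coeff \<gamma> * reflect (zp_coeff (dual_param \<gamma>)) = (hvar + 3) * shift 2 \<gamma> * (1 / ((- (hvar + 3)) * (- shift 2 \<gamma>)))"
    by (simp only: zm_coeff_def)
  also have "\<dots> = 1"
  proof -
    have "u * S * (1 / ((- u) * (- S))) = 1" if "u \<noteq> 0" "S \<noteq> 0" for u S :: rf
      using that by simp
    from this[where u="hvar + 3" and S="shift 2 \<gamma>"] show ?thesis using assms hvar_shifts_nonzero by (simp add: shift_eq_0)
  qed
  finally show ?thesis .
qed

lemma gen_coeff_Zm_inverse: assumes "\<gamma> \<noteq> 0" shows "zp_coeff \<gamma> * reflect (zm_coeff (dual_param \<gamma>)) = 1"
proof -
  have "reflect (hvar + 3) = - (hvar - 1)" by (simp add: reflect_add reflect_hvar reflect_numeral algebra_simps)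
  hence "reflect (zm_coeff (dual_param \<gamma>)) = (- (hvar - 1)) * (- \<gamma>)"
    by (simp add: zm_coeff_def reflect_mult reflect_shift shift_dual_param reflect_uminus reflect_reflect shift_uminus shift_shift)
  hence "zp_coeff \<gamma> * reflect (zm_coeff (dual_param \<gamma>)) = 1 / ((hvar - 1) * \<gamma>) * ((- (hvar - 1)) * (- \<gamma>))"
    by (simp only: zp_coeff_def)
  also have "\<dots> = 1" using assms hvar_shifts_nonzero by (simp add: field_simps)
  finally show ?thesis .
qed

lemma gen_coeff_inv: "\<beta> \<in> {1, -1} \<Longrightarrow> \<gamma> \<noteq> 0 \<Longrightarrow> gen_coeff \<beta> \<gamma> (swap g) * reflect (gen_coeff \<beta> (dual_param \<gamma>) g) = 1"
  by (cases g) (simp_all add: gen_coeff_T_inverse gen_coeff_Zp_inverse gen_coeff_Zm_inverse)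

lemma twist_coeff_inv: "\<beta> \<in> {1, -1} \<Longrightarrow> \<gamma> \<noteq> 0 \<Longrightarrow> twist_coeff \<beta> \<gamma> (map swap v) * reflect (twist_coeff \<beta> (dual_param \<gamma>) v) = 1"
proof (induct v)
  case Nil thus ?case by (simp add: reflect_1)
next
  case (Cons g w)
  have a: "twist_coeff \<beta> \<gamma> (map swap (g # w)) = shift (wt w) (gen_coeff \<beta> \<gamma> (swap g)) * twist_coeff \<beta> \<gamma> (map swap w)" by simp
  have b: "reflect (twist_coeff \<beta> (dual_param \<gamma>) (g # w)) = shift (wt w) (reflect (gen_coeff \<beta> (dual_param \<gamma>) g)) * reflect (twist_coeff \<beta> (dual_param \<gamma>) w)"
    by (simp add: reflect_mult reflect_shift)
  have "twist_coeff \<beta> \<gamma> (map swap (g # w)) * reflect (twist_coeff \<beta> (dual_param \<gamma>) (g # w))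
      = shift (wt w) (gen_coeff \<beta> \<gamma> (swap g) * reflect (gen_coeff \<beta> (dual_param \<gamma>) g)) * (twist_coeff \<beta> \<gamma> (map swap w) * reflect (twist_coeff \<beta> (dual_param \<gamma>) w))"
    unfolding a b shift_mult by (simp only: mult_ac)
  also have "\<dots> = 1" using Cons gen_coeff_inv[OF Cons.prems] by (simp add: shift_1)
  finally show ?case .
qed

lemma twist_dual_twist: "\<beta> \<in> {1, -1} \<Longrightarrow> \<gamma> \<noteq> 0 \<Longrightarrow> twist \<beta> \<gamma> (twist \<beta> (dual_param \<gamma>) a) = a"
proof
  fix v assume b: "\<beta> \<in> {1, -1}" and g: "\<gamma> \<noteq> 0"
  have "twist \<beta> \<gamma> (twist \<beta> (dual_param \<gamma>) a) v = (twist_coeff \<beta> \<gamma> (map swap v) * reflect (twist_coeff \<beta> (dual_param \<gamma>) v)) * a v"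
    by (simp add: twist_def reflect_mult reflect_reflect mult_ac)
  thus "twist \<beta> \<gamma> (twist \<beta> (dual_param \<gamma>) a) v = a v" using twist_coeff_inv[OF b g] by simp
qed

lemma twist_twist_dual: "\<beta> \<in> {1, -1} \<Longrightarrow> \<gamma> \<noteq> 0 \<Longrightarrow> twist \<beta> (dual_param \<gamma>) (twist \<beta> \<gamma> a) = a"
  using twist_dual_twist[of \<beta> "dual_param \<gamma>" a] dual_param_dual_param[of \<gamma>] dual_param_nz[of \<gamma>] by simp

lemma map_swap_eq: "map swap v = u \<longleftrightarrow> v = map swap u"
  by (metis map_swap_swap)

lemma Ubar_beta: "\<beta> \<in> {1, -1} \<Longrightarrow> \<beta> \<in> Ubar" using Ubar_1 Ubar_uminus by auto

lemma shift_beta: "\<beta> \<in> {1, -1} \<Longrightarrow> shift k \<beta> = \<beta>" by (auto simp: shift_1 shift_uminus)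

lemma Ubar_t_coeff: "\<beta> \<in> {1, -1} \<Longrightarrow> t_coeff \<beta> \<in> Ubar"
  unfolding t_coeff_def divide_inverse
  by (intro Ubar_mult Ubar_beta Ubar_add Ubar_hvar Ubar_numeral Ubar_inv_hvar)

lemma Ubar_zp_coeff: "inverse \<gamma> \<in> Ubar \<Longrightarrow> zp_coeff \<gamma> \<in> Ubar"
proof -
  assume g: "inverse \<gamma> \<in> Ubar"
  have "inverse (hvar - 1) \<in> Ubar" using Ubar_inv_lin[of "-1"] by simp
  thus ?thesis unfolding zp_coeff_def using g by (simp add: inverse_mult_distrib divide_inverse Ubar_mult)
qed

lemma Ubar_zm_coeff: "\<gamma> \<in> Ubar \<Longrightarrow> zm_coeff \<gamma> \<in> Ubar"
  unfolding zm_coeff_def by (intro Ubar_mult Ubar_add Ubar_hvar Ubar_numeral Ubar_shift)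

definition admissible :: "rf \<Rightarrow> rf \<Rightarrow> bool" where
  "admissible \<beta> \<gamma> \<longleftrightarrow> \<beta> \<in> {1, -1} \<and> \<gamma> \<in> Ubar \<and> inverse \<gamma> \<in> Ubar \<and> \<gamma> \<noteq> 0"

lemma admissible_dual_param: "admissible \<beta> \<gamma> \<Longrightarrow> admissible \<beta> (dual_param \<gamma>)"
  unfolding admissible_def dual_param_def
  by (auto simp: Ubar_uminus Ubar_reflect Ubar_shift reflect_inverse[symmetric] shift_inverse[symmetric]
      reflect_eq_0 shift_eq_0 reflect_uminus[symmetric])

lemma Ubar_gen_coeff: "admissible \<beta> \<gamma> \<Longrightarrow> gen_coeff \<beta> \<gamma> g \<in> Ubar"
  by (cases g) (auto simp: admissible_def Ubar_t_coeff Ubar_zp_coeff Ubar_zm_coeff)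

lemma Ubar_twist_coeff: "admissible \<beta> \<gamma> \<Longrightarrow> twist_coeff \<beta> \<gamma> w \<in> Ubar"
  by (induct w) (auto simp: Ubar_1 Ubar_gen_coeff Ubar_mult Ubar_shift)

lemma twist_carrier: assumes g: "admissible \<beta> \<gamma>" and a: "a \<in> carrier FA" shows "twist \<beta> \<gamma> a \<in> carrier FA"
proof -
  have "{v. twist \<beta> \<gamma> a v \<noteq> 0} \<subseteq> map swap ` {w. a w \<noteq> 0}"
  proof
    fix v assume "v \<in> {v. twist \<beta> \<gamma> a v \<noteq> 0}"
    hence "a (map swap v) \<noteq> 0" by (auto simp: twist_def reflect_0)
    thus "v \<in> map swap ` {w. a w \<noteq> 0}" by (intro image_eqI[of _ _ "map swap v"]) auto
  qed
  moreover have "finite {w. a w \<noteq> 0}" using a by (simp add: carrier_FA)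
  ultimately have "finite {v. twist \<beta> \<gamma> a v \<noteq> 0}" by (rule finite_subset[OF _ finite_imageI])
  moreover have "twist \<beta> \<gamma> a v \<in> Ubar" for v
    using a g by (auto simp: twist_def carrier_FA intro!: Ubar_mult Ubar_twist_coeff Ubar_reflect)
  ultimately show ?thesis by (simp add: carrier_FA)
qed

lemma hvar_minus_2_nz: "hvar - 2 \<noteq> 0" using hvar_plus_int_nz[of "-2"] by simp

lemma twist_rel1: assumes b: "\<beta> \<in> {1, -1}" shows "twist \<beta> \<gamma> rel1 = (\<lambda>w. rel3 w * (- \<beta> * zp_coeff \<gamma>))"
proof
  fix v
  show "twist \<beta> \<gamma> rel1 v = rel3 v * (- \<beta> * zp_coeff \<gamma>)"
  proof (cases "v = [Zm, T] \<or> v = [T, Zm]")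
    case False
    thus ?thesis by (auto simp: twist_def rel1_def rel3_def mono_apply map_swap_eq reflect_0)
  next
    case True
    then consider "v = [Zm, T]" | "v = [T, Zm]" by blast
    thus ?thesis
    proof cases
      case 1
      have "twist \<beta> \<gamma> rel1 v = zp_coeff \<gamma> * t_coeff \<beta>" using 1 by (simp add: twist_def rel1_def mono_apply reflect_1)
      also have "\<dots> = rel3 v * (- \<beta> * zp_coeff \<gamma>)"
        using 1 hvar_shifts_nonzero by (simp add: rel3_def mono_apply t_coeff_def)
      finally show ?thesis .
    next
      case 2
      have "twist \<beta> \<gamma> rel1 v = shift (-2) (t_coeff \<beta>) * zp_coeff \<gamma> * reflect (- ((hvar + 4) / (hvar + 2)))"
        using 2 by (simp add: twist_def rel1_def mono_apply)
      also have "\<dots> = - \<beta> * zp_coeff \<gamma>"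
        using hvar_shifts_nonzero hvar_minus_2_nz b
        by (simp add: t_coeff_def shift_simps reflect_simps shift_beta field_simps)
      also have "\<dots> = rel3 v * (- \<beta> * zp_coeff \<gamma>)" using 2 by (simp add: rel3_def mono_apply)
      finally show ?thesis .
    qed
  qed
qed

lemma twist_rel3: assumes b: "\<beta> \<in> {1, -1}" shows "twist \<beta> \<gamma> rel3 = (\<lambda>w. rel1 w * (- \<beta> * zm_coeff \<gamma>))"
proof
  fix v
  show "twist \<beta> \<gamma> rel3 v = rel1 v * (- \<beta> * zm_coeff \<gamma>)"
  proof (cases "v = [T, Zp] \<or> v = [Zp, T]")
    case False
    thus ?thesis by (auto simp: twist_def rel1_def rel3_def mono_apply map_swap_eq reflect_0)
  next
    case True
    then consider "v = [T, Zp]" | "v = [Zp, T]" by blast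
    thus ?thesis
    proof cases
      case 1
      have "twist \<beta> \<gamma> rel3 v = shift 2 (t_coeff \<beta>) * zm_coeff \<gamma>" using 1 by (simp add: twist_def rel3_def mono_apply reflect_1)
      also have "\<dots> = rel1 v * (- \<beta> * zm_coeff \<gamma>)"
        using 1 hvar_shifts_nonzero b by (simp add: rel1_def mono_apply t_coeff_def shift_simps shift_beta field_simps)
      finally show ?thesis .
    next
      case 2
      have "twist \<beta> \<gamma> rel3 v = zm_coeff \<gamma> * t_coeff \<beta> * reflect (- ((hvar + 2) / hvar))"
        using 2 by (simp add: twist_def rel3_def mono_apply)
      also have "\<dots> = zm_coeff \<gamma> * (\<beta> * (hvar + 2) / hvar) * (- ((- hvar) / (- (hvar + 2))))"
        by (simp add: t_coeff_def reflect_simps)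
      also have "\<dots> = - \<beta> * zm_coeff \<gamma>"
      proof -
        have "m * (b * u / x) * (- ((- x) / (- u))) = - b * m" if "x \<noteq> 0" "u \<noteq> 0" for m b x u :: rf
          using that by (simp add: field_simps)
        from this[where x=hvar and u="hvar + 2"] show ?thesis using hvar_shifts_nonzero by simp
      qed
      also have "\<dots> = rel1 v * (- \<beta> * zm_coeff \<gamma>)" using 2 by (simp add: rel1_def mono_apply)
      finally show ?thesis .
    qed
  qed
qed

lemma twist_rel2_ZmZp_coeff:
  assumes "\<gamma> \<noteq> 0"
  shows "shift 2 (zp_coeff \<gamma>) * zm_coeff \<gamma> = - zmzp_coeff hvar * (- (hvar + 2) / hvar)"
proof -
  have "shift 2 \<gamma> \<noteq> 0" using assms by (simp add: shift_eq_0)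
  have "shift 2 (zp_coeff \<gamma>) * zm_coeff \<gamma> = 1 / ((hvar + 1) * shift 2 \<gamma>) * ((hvar + 3) * shift 2 \<gamma>)"
    by (simp add: zp_coeff_def zm_coeff_def shift_simps algebra_simps)
  also have "\<dots> = (hvar + 3) / (hvar + 1)"
    using hvar_shifts_nonzero \<open>shift 2 \<gamma> \<noteq> 0\<close> by simp
  also have "\<dots> = (hvar + 2) * (hvar * (hvar + 3) / ((hvar + 1) * (hvar + 2))) / hvar"
    using zmzp_coeff_hvar_times by (simp add: zmzp_coeff_def)
  also have "\<dots> = - zmzp_coeff hvar * (- (hvar + 2) / hvar)"
  proof -
    have "u * X / x = (- X) * (- u / x)" for u X x :: rf
      by (simp add: divide_inverse mult_ac)
    then show ?thesis unfolding zmzp_coeff_def .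
  qed
  finally show ?thesis .
qed

lemma twist_rel2_TT_coeff:
  assumes "\<beta> \<in> {1, -1}"
  shows "t_coeff \<beta> * t_coeff \<beta> * reflect (1 / hvar) = 1 / hvar * (- (hvar + 2) / hvar)"
proof -
  have "(b * u / x) * (b * u / x) * (1 / (- u)) = 1 / x * (- u / x)"
    if "x \<noteq> 0" "u \<noteq> 0" "b * b = 1" for b u x :: rf
  proof -
    have "(b * u / x) * (b * u / x) * (1 / (- u)) = (b * b) * (- u / (x * x))"
      using that by (simp add: field_simps)
    then show ?thesis using that by (simp add: field_simps)
  qed
  from this[where b=\<beta> and u="hvar + 2" and x=hvar] show ?thesis
    using hvar_shifts_nonzero sign_mult_self[OF assms] by (simp add: t_coeff_def reflect_simps)
qed

lemma twist_rel2_ZpZm_coeff: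
  assumes "\<gamma> \<noteq> 0"
  shows "shift (-2) (zm_coeff \<gamma>) * zp_coeff \<gamma> * reflect (- zmzp_coeff hvar) = - (hvar + 2) / hvar"
proof -
  have "shift (-2) (zm_coeff \<gamma>) = (hvar + 1) * \<gamma>"
    by (simp add: zm_coeff_def shift_simps algebra_simps)
  moreover have "reflect (- zmzp_coeff hvar) = - ((- (hvar + 2)) * (- (hvar - 1)) / ((- (hvar + 1)) * (- hvar)))"
    by (simp add: zmzp_coeff_def reflect_simps algebra_simps)
  moreover have "(u * g) * (1 / (w * g)) * (- ((- v) * (- w) / ((- u) * (- x)))) = - v / x"
    if "x \<noteq> 0" "u \<noteq> 0" "w \<noteq> 0" "g \<noteq> 0" for x u v w g :: rf
    using that by (simp add: field_simps)
  note this[where x=hvar and u="hvar + 1" and v="hvar + 2" and w="hvar - 1" and g=\<gamma>]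
  ultimately show ?thesis
    using hvar_shifts_nonzero assms by (simp add: zp_coeff_def)
qed

lemma twist_rel2:
  assumes b: "\<beta> \<in> {1, -1}" and g: "\<gamma> \<noteq> 0"
  shows "twist \<beta> \<gamma> rel2 = (\<lambda>w. rel2 w * (- (hvar + 2) / hvar))"
proof
  fix v
  consider "v = [Zm, Zp]" | "v = []" | "v = [T, T]" | "v = [Zp, Zm]"
    | "v \<notin> {[Zm, Zp], [], [T, T], [Zp, Zm]}" by blast
  then show "twist \<beta> \<gamma> rel2 v = rel2 v * (- (hvar + 2) / hvar)"
  proof cases
    case 1
    then show ?thesis using twist_rel2_ZmZp_coeff[OF g] by (simp add: twist_def rel2_eq mono_apply reflect_1)
  next
    case 2
    then show ?thesis using hvar_shifts_nonzero by (simp add: twist_def rel2_eq mono_apply reflect_simps field_simps)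
  next
    case 3
    then show ?thesis using twist_rel2_TT_coeff[OF b] by (simp add: twist_def rel2_eq mono_apply)
  next
    case 4
    then show ?thesis using twist_rel2_ZpZm_coeff[OF g] by (simp add: twist_def rel2_eq mono_apply)
  next
    case 5
    then show ?thesis by (auto simp: twist_def rel2_eq mono_apply map_swap_eq reflect_0)
  qed
qed

lemma twist_ring_hom: "admissible \<beta> \<gamma> \<Longrightarrow> twist \<beta> \<gamma> \<in> ring_hom FA FA"
  by (rule ring_hom_memI) (simp_all add: twist_carrier mult_FA add_FA one_FA twist_mult twist_add twist_one)

lemma twist_rels_DRideal:
  assumes g: "admissible \<beta> \<gamma>" and r: "r \<in> rels"
  shows "twist \<beta> \<gamma> r \<in> DRideal"
proof -
  have b: "\<beta> \<in> {1, -1}" and gz: "\<gamma> \<noteq> 0" using g by (auto simp: admissible_def)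
  have k1: "- \<beta> * zp_coeff \<gamma> \<in> Ubar" and k3: "- \<beta> * zm_coeff \<gamma> \<in> Ubar"
    using g by (auto simp: admissible_def Ubar_beta Ubar_zp_coeff Ubar_zm_coeff intro!: Ubar_mult Ubar_uminus)
  have k2: "- (hvar + 2) / hvar \<in> Ubar"
    by (simp only: divide_inverse) (intro Ubar_mult Ubar_uminus Ubar_add Ubar_hvar Ubar_numeral Ubar_inv_hvar)
  have "twist \<beta> \<gamma> rel1 \<in> DRideal" unfolding twist_rel1[OF b]
    by (rule DRideal_mult_scalar[OF _ k1]) (simp add: rels_DRideal rels_eq)
  moreover have "twist \<beta> \<gamma> rel2 \<in> DRideal" unfolding twist_rel2[OF b gz]
    by (rule DRideal_mult_scalar[OF _ k2]) (simp add: rels_DRideal rels_eq)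
  moreover have "twist \<beta> \<gamma> rel3 \<in> DRideal" unfolding twist_rel3[OF b]
    by (rule DRideal_mult_scalar[OF _ k3]) (simp add: rels_DRideal rels_eq)
  ultimately show ?thesis using r by (auto simp: rels_eq)
qed

lemma twist_DRideal:
  assumes g: "admissible \<beta> \<gamma>" and a: "a \<in> DRideal"
  shows "twist \<beta> \<gamma> a \<in> DRideal"
proof -
  interpret ring_hom_ring FA FA "twist \<beta> \<gamma>"
    by (rule ring_hom_ringI2[OF ring_FA ring_FA twist_ring_hom[OF g]])
  have "rels \<subseteq> {r \<in> carrier FA. twist \<beta> \<gamma> r \<in> DRideal}"
    using rels_carrier twist_rels_DRideal[OF g] by auto
  then have "genideal FA rels \<subseteq> {r \<in> carrier FA. twist \<beta> \<gamma> r \<in> DRideal}"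
    by (rule ring.genideal_minimal[OF ring_FA ideal_vimage[OF ideal_DR]])
  then show ?thesis using a by (auto simp: DRideal_def)
qed

definition twist_DR :: "rf \<Rightarrow> rf \<Rightarrow> (gen list \<Rightarrow> rf) set \<Rightarrow> (gen list \<Rightarrow> rf) set" where
  "twist_DR \<beta> \<gamma> X = (\<Union>y\<in>X. cls (twist \<beta> \<gamma> y))"

lemma twist_DR_cls: assumes g: "admissible \<beta> \<gamma>" and x: "x \<in> carrier FA" shows "twist_DR \<beta> \<gamma> (cls x) = cls (twist \<beta> \<gamma> x)"
proof -
  have "cls (twist \<beta> \<gamma> y) = cls (twist \<beta> \<gamma> x)" if y: "y \<in> cls x" for y
  proof -
    obtain i where i: "i \<in> DRideal" and yi: "y = i \<oplus>\<^bsub>FA\<^esub> x"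
      using y unfolding cls_def a_r_coset_def' by auto
    have ic: "i \<in> carrier FA" using DRideal_carrier[OF i] .
    have "twist \<beta> \<gamma> y = (\<lambda>w. twist \<beta> \<gamma> i w + twist \<beta> \<gamma> x w)" using yi by (simp add: add_FA twist_add)
    moreover have "twist \<beta> \<gamma> i \<in> DRideal" by (rule twist_DRideal[OF g i])
    moreover have "twist \<beta> \<gamma> x \<in> carrier FA" by (rule twist_carrier[OF g x])
    ultimately show ?thesis
      using ring.ring_simprules(1)[OF ring_FA, of "twist \<beta> \<gamma> i" "twist \<beta> \<gamma> x"] DRideal_carrier
      by (intro cls_eqI) (auto simp: add_FA)
  qed
  thus ?thesis unfolding twist_DR_def using mem_cls_self[OF x] by blast
qed

lemma carrier_DR: "X \<in> carrier DR \<Longrightarrow> \<exists>x\<in>carrier FA. X = cls x"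
  by (auto simp: DR_def FactRing_def A_RCOSETS_def' cls_def)

lemma one_DR: "\<one>\<^bsub>DR\<^esub> = cls (\<lambda>w. if w = [] then 1 else 0)"
  by (simp add: DR_def FactRing_def cls_def one_FA)

lemma twist_DR_carrier: assumes g: "admissible \<beta> \<gamma>" shows "X \<in> carrier DR \<Longrightarrow> twist_DR \<beta> \<gamma> X \<in> carrier DR"
proof -
  assume "X \<in> carrier DR"
  then obtain x where x: "x \<in> carrier FA" "X = cls x" using carrier_DR by blast
  thus "twist_DR \<beta> \<gamma> X \<in> carrier DR" by (simp add: twist_DR_cls[OF g] cls_carrier twist_carrier[OF g])
qed

lemma twist_DR_iso: assumes g: "admissible \<beta> \<gamma>" shows "twist_DR \<beta> \<gamma> \<in> ring_iso DR DR"
proof (rule ring_iso_memI)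
  show "twist_DR \<beta> \<gamma> X \<in> carrier DR" if "X \<in> carrier DR" for X
    using twist_DR_carrier[OF g that] .
next
  fix X Y assume "X \<in> carrier DR" "Y \<in> carrier DR"
  then obtain x y where x: "x \<in> carrier FA" "X = cls x" and y: "y \<in> carrier FA" "Y = cls y"
    using carrier_DR by metis
  show "twist_DR \<beta> \<gamma> (X \<otimes>\<^bsub>DR\<^esub> Y) = twist_DR \<beta> \<gamma> X \<otimes>\<^bsub>DR\<^esub> twist_DR \<beta> \<gamma> Y"
    using x y by (simp add: cls_mult twist_DR_cls[OF g] fmult_carrier twist_carrier[OF g] twist_mult)
  show "twist_DR \<beta> \<gamma> (X \<oplus>\<^bsub>DR\<^esub> Y) = twist_DR \<beta> \<gamma> X \<oplus>\<^bsub>DR\<^esub> twist_DR \<beta> \<gamma> Y"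
    using x y ring.ring_simprules(1)[OF ring_FA, of x y]
    by (simp add: cls_add twist_DR_cls[OF g] twist_carrier[OF g] twist_add add_FA)
next
  show "twist_DR \<beta> \<gamma> \<one>\<^bsub>DR\<^esub> = \<one>\<^bsub>DR\<^esub>"
    using ring.ring_simprules(6)[OF ring_FA] by (simp add: one_DR twist_DR_cls[OF g] twist_one one_FA)
next
  have g': "admissible \<beta> (dual_param \<gamma>)" by (rule admissible_dual_param[OF g])
  have b: "\<beta> \<in> {1, -1}" and gz: "\<gamma> \<noteq> 0" using g by (auto simp: admissible_def)
  show "bij_betw (twist_DR \<beta> \<gamma>) (carrier DR) (carrier DR)"
  proof (rule bij_betwI[where g = "twist_DR \<beta> (dual_param \<gamma>)"])
    show "twist_DR \<beta> \<gamma> \<in> carrier DR \<rightarrow> carrier DR" "twist_DR \<beta> (dual_param \<gamma>) \<in> carrier DR \<rightarrow> carrier DR"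
      using twist_DR_carrier[OF g] twist_DR_carrier[OF g'] by auto
  next
    fix X assume "X \<in> carrier DR"
    then obtain x where x: "x \<in> carrier FA" "X = cls x" using carrier_DR by blast
    thus "twist_DR \<beta> (dual_param \<gamma>) (twist_DR \<beta> \<gamma> X) = X"
      by (simp add: twist_DR_cls[OF g] twist_DR_cls[OF g'] twist_carrier[OF g] twist_twist_dual[OF b gz])
  next
    fix X assume "X \<in> carrier DR"
    then obtain x where x: "x \<in> carrier FA" "X = cls x" using carrier_DR by blast
    thus "twist_DR \<beta> \<gamma> (twist_DR \<beta> (dual_param \<gamma>) X) = X"
      by (simp add: twist_DR_cls[OF g] twist_DR_cls[OF g'] twist_carrier[OF g'] twist_dual_twist[OF b gz])
  qed
qed

lemma twist_DR_cmono:
  "admissible \<beta> \<gamma> \<Longrightarrow> f \<in> Ubar \<Longrightarrow>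
    twist_DR \<beta> \<gamma> (cmono w f) = cmono (map swap w) (twist_coeff \<beta> \<gamma> w * reflect f)"
  by (simp add: twist_DR_cls mono_carrier twist_mono)

lemma twist_DR_alg_aut: "admissible \<beta> \<gamma> \<Longrightarrow> DR_alg_aut (twist_DR \<beta> \<gamma>)"
  unfolding DR_alg_aut_def by (simp add: twist_DR_iso twist_DR_cmono Ubar_cst reflect_cst)

lemma twist_DR_generators:
  assumes "admissible \<beta> \<gamma>"
  shows "twist_DR \<beta> \<gamma> (cmono [] hvar) = cmono [] (- hvar - 2)"
    and "twist_DR \<beta> \<gamma> (cmono [T] 1) = cmono [T] (\<beta> * (hvar + 2) / hvar)"
    and "twist_DR \<beta> \<gamma> (cmono [Zp] 1) = cmono [Zm] (1 / ((hvar - 1) * \<gamma>))"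
    and "twist_DR \<beta> \<gamma> (cmono [Zm] 1) = cmono [Zp] ((hvar + 3) * shift 2 \<gamma>)"
  using assms by (simp_all add: twist_DR_cmono Ubar_hvar Ubar_1 reflect_hvar reflect_1 t_coeff_def zp_coeff_def zm_coeff_def)

theorem lemma6p1:
  shows "(\<forall>\<phi> f1 f2 f3 f4. f1 \<in> Ubar \<and> f2 \<in> Ubar \<and> f3 \<in> Ubar \<and> f4 \<in> Ubar \<and>
            DR_alg_aut \<phi> \<and>
            \<phi> (cls (mono [] hvar)) = cls (mono [] f1) \<and>
            \<phi> (cls (mono [T] 1)) = cls (mono [T] f2) \<and>
            \<phi> (cls (mono [Zp] 1)) = cls (mono [Zm] f3) \<and>
            \<phi> (cls (mono [Zm] 1)) = cls (mono [Zp] f4)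
          \<longrightarrow> (\<exists>\<beta> \<gamma>. \<beta> \<in> {1, -1} \<and> \<gamma> \<noteq> 0 \<and>
                 f1 = - hvar - 2 \<and>
                 f2 = \<beta> * (hvar + 2) / hvar \<and>
                 f3 = 1 / ((hvar - 1) * \<gamma>) \<and>
                 f4 = (hvar + 3) * shift 2 \<gamma>))
       \<and> (\<forall>\<beta> \<gamma>. \<beta> \<in> {1, -1} \<and> \<gamma> \<in> Ubar \<and> inverse \<gamma> \<in> Ubar \<and> \<gamma> \<noteq> 0
          \<longrightarrow> (\<exists>\<phi>. DR_alg_aut \<phi> \<and>
                 \<phi> (cls (mono [] hvar)) = cls (mono [] (- hvar - 2)) \<and>
                 \<phi> (cls (mono [T] 1)) = cls (mono [T] (\<beta> * (hvar + 2) / hvar)) \<and>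
                 \<phi> (cls (mono [Zp] 1)) = cls (mono [Zm] (1 / ((hvar - 1) * \<gamma>))) \<and>
                 \<phi> (cls (mono [Zm] 1)) = cls (mono [Zp] ((hvar + 3) * shift 2 \<gamma>))))"
proof (intro conjI allI impI, goal_cases)
  case (1 \<phi> f1 f2 f3 f4)
  then interpret DR_aut_of_form \<phi> f1 f2 f3 f4 by unfold_locales auto
  show ?case by (rule coeffs_form)
next
  case (2 \<beta> \<gamma>)
  then have "admissible \<beta> \<gamma>" by (simp add: admissible_def)
  then show ?case using twist_DR_alg_aut twist_DR_generators by blast
qed

end
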